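(* Consider a network whose three-phase primary line has non-substation nodes $1,\dots,N$, and $M$ loads, each load $k$ attached to exactly one node $\nu(k)$ and having a known type: single-phase, two-phase, or three-phase. Define the $3N\times 3M$ matrices $\hat U^1,\hat U^2$ of $3\times3$ blocks, with $(n,k)$-blocks $\hat U^1_{nk}=\hat U^2_{nk}=\mathbb 0_{3\times3}$ if $n\ne\nu(k)$, and for $n=\nu(k)$: $\hat U^1_{nk}=I_3,\ \hat U^2_{nk}=\mathbb 0_{3\times3}$ if $k$ is single-phase; $\hat U^1_{nk}=\tfrac12W_1^T,\ \hat U^2_{nk}=\tfrac{\sqrt3}{6}W_2^T$ if $k$ is two-phase; $\hat U^1_{nk}=\tfrac13\mathbb 1_{3\times3},\ \hat U^2_{nk}=\mathbb 0_{3\times3}$ if $k$ is three-phase, where $$W_1=\begin{bmatrix}1&1&0\\0&1&1\\1&0&1\end{bmatrix},\qquad W_2=\begin{bmatrix}1&-1&0\\0&1&-1\\-1&0&1\end{bmatrix}.$$ Let $G,H$ be arbitrary real $3M\times 3N$ matrices and set $\hat K=G\hat U^1+H\hat U^2$, $\hat L=G\hat U^2-H\hat U^1$. With $\mathcal F$, $X(\boldsymbol x)$, $\tilde{\boldsymbol v}(t,\boldsymbol x)$, $\tilde{\boldsymbol v}(t)=\tilde{\boldsymbol v}(t,\boldsymbol x^* )+\boldsymbol n(t)$, $\boldsymbol n(t)\sim\mathcal N(\mathbf 0_M,\Sigma_n)$ and hypotheses (1)–(3) exactly as in the setting below, fix a load index $m$ and define, writing $\tilde v_m(t)$, $\tilde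 v_m(t,\boldsymbol x)$ for the $m$-th entries, $$f_{m,T}(\boldsymbol x)=\frac1T\sum_{t=1}^T[\tilde v_m(t)-\tilde v_m(t,\boldsymbol x)]^2.$$ Then (a) almost surely $\lim_{T\to\infty}f_{m,T}(\boldsymbol x^* )$ exists and $\liminf_{T\to\infty}f_{m,T}(\boldsymbol x)\ge\lim_{T\to\infty}f_{m,T}(\boldsymbol x^* )$ for all $\boldsymbol x\in\mathcal F$, i.e. $\boldsymbol x^*$ is a global minimizer of $f_{m,T}$ as $T\to\infty$; and (b) every $\boldsymbol x\in\mathcal F$ such that $x_m^i=x_m^{*i}$ for all $i$ and $x_k^i=x_k^{*i}$ for all $i$ and all $k\ne m$ for which load $k$ is not three-phase, satisfies $\tilde v_m(t,\boldsymbol x)=\tilde v_m(t,\boldsymbol x^* )$ for all $t$, and hence is also a global minimizer of $f_{m,T}$ as $T\to\infty$.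
   Context: Setting (shared): $\mathcal F$ is the set of $\boldsymbol x=[x_1^1,x_1^2,x_1^3,\dots,x_M^1,x_M^2,x_M^3]^T\in\{0,1\}^{3M}$ with $\sum_{i=1}^3x_k^i=1$ for each $k$; $X(\boldsymbol x)=\mathrm{diag}([x_1^1\ x_1^2\ x_1^3],\dots,[x_M^1\ x_M^2\ x_M^3])$ is $M\times3M$ block diagonal; for random inputs $\tilde{\boldsymbol v}^{\mathrm{ref}}(t)\in\mathbb R^{3M}$, $\tilde{\boldsymbol p}(t),\tilde{\boldsymbol q}(t)\in\mathbb R^M$, $\tilde{\boldsymbol v}(t,\boldsymbol x)=X\tilde{\boldsymbol v}^{\mathrm{ref}}(t)+X\hat KX^T\tilde{\boldsymbol p}(t)+X\hat LX^T\tilde{\boldsymbol q}(t)$; $\boldsymbol x^*\in\mathcal F$ is the true phase connection, $\Sigma_n$ is positive definite. Hypotheses: (1) the $\boldsymbol n(t)$ are i.i.d. and the noise sequence is independent of the input sequence $(\tilde{\boldsymbol v}^{\mathrm{ref}}(t),\tilde{\boldsymbol p}(t),\tilde{\boldsymbol q}(t))_{t\ge1}$; (2) the input triples are independent across distinct times; (3) for each $\boldsymbol x\in\mathcal F$, $\sup_t\mathbb E\|\tilde{\boldsymbol v}(t,\boldsymbol x^* )-\tilde{\boldsymbol v}(t,\boldsymbol x)\|^2<\infty$. $I_n$ is the identity, $\mathbb 0_{k\times l}$, $\mathbb 1_{k\times l}$ the all-zero/all-one matrices. For a single-phase load the three connections are $AN,BN,CN$; for a two-phase (delta) load $AB,BC,CA$;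 for a three-phase load the index indicates which phase's voltage is measured. $f_{m,T}$ is, up to constants and positive scaling, the negative marginal log-likelihood of load $m$'s observations. *)

theory Defs
  imports "HOL-Probability.Probability"
begin

text \<open>Indexing conventions (0-based): nodes n < N, loads k < M, phases a < 3.
  A 3M-vector has entry 3*k+a for phase a of load k; a 3N-vector entry 3*n+a.
  Vectors and matrices are functions on nat, used only within the stated ranges.\<close>

datatype loadtype = SinglePhase | TwoPhase | ThreePhase

definition W1 :: "nat \<Rightarrow> nat \<Rightarrow> real" where
  "W1 i j = [[1,1,0],[0,1,1],[1,0,1]] ! i ! j"

definition W2 :: "nat \<Rightarrow> nat \<Rightarrow> real" where
  "W2 i j = [[1,-1,0],[0,1,-1],[-1,0,1]] ! i ! j"

definition U1 :: "(nat \<Rightarrow> nat) \<Rightarrow> (nat \<Rightarrow> loadtype) \<Rightarrow> nat \<Rightarrow> nat \<Rightarrow> real" where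
  "U1 \<nu> ty r c =
     (if r div 3 \<noteq> \<nu> (c div 3) then 0 else
      (case ty (c div 3) of
         SinglePhase \<Rightarrow> (if r mod 3 = c mod 3 then 1 else 0)
       | TwoPhase \<Rightarrow> 1/2 * W1 (c mod 3) (r mod 3)
       | ThreePhase \<Rightarrow> 1/3))"

definition U2 :: "(nat \<Rightarrow> nat) \<Rightarrow> (nat \<Rightarrow> loadtype) \<Rightarrow> nat \<Rightarrow> nat \<Rightarrow> real" where
  "U2 \<nu> ty r c =
     (if r div 3 \<noteq> \<nu> (c div 3) then 0 else
      (case ty (c div 3) of
         SinglePhase \<Rightarrow> 0
       | TwoPhase \<Rightarrow> sqrt 3 / 6 * W2 (c mod 3) (r mod 3)
       | ThreePhase \<Rightarrow> 0))"

definition Khat :: "nat \<Rightarrow> (nat \<Rightarrow> nat) \<Rightarrow> (nat \<Rightarrow> loadtype) \<Rightarrow> (nat \<Rightarrow> nat \<Rightarrow> real) \<Rightarrow> (nat \<Rightarrow> nat \<Rightarrow> real) \<Rightarrow> nat \<Rightarrow> nat \<Rightarrow> real" where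
  "Khat N \<nu> ty G H i j = (\<Sum>l<3*N. G i l * U1 \<nu> ty l j) + (\<Sum>l<3*N. H i l * U2 \<nu> ty l j)"

definition Lhat :: "nat \<Rightarrow> (nat \<Rightarrow> nat) \<Rightarrow> (nat \<Rightarrow> loadtype) \<Rightarrow> (nat \<Rightarrow> nat \<Rightarrow> real) \<Rightarrow> (nat \<Rightarrow> nat \<Rightarrow> real) \<Rightarrow> nat \<Rightarrow> nat \<Rightarrow> real" where
  "Lhat N \<nu> ty G H i j = (\<Sum>l<3*N. G i l * U2 \<nu> ty l j) - (\<Sum>l<3*N. H i l * U1 \<nu> ty l j)"

definition feasible :: "nat \<Rightarrow> (nat \<Rightarrow> real) set" where
  "feasible M = {x. (\<forall>j<3*M. x j \<in> {0,1}) \<and> (\<forall>j\<ge>3*M. x j = 0)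
                    \<and> (\<forall>k<M. x (3*k) + x (3*k+1) + x (3*k+2) = 1)}"

definition Xmat :: "(nat \<Rightarrow> real) \<Rightarrow> nat \<Rightarrow> nat \<Rightarrow> real" where
  "Xmat x k j = (if j div 3 = k then x j else 0)"

text \<open>v-tilde(x) = X vref + X K X^T p + X L X^T q, k-th entry (k < M).\<close>
definition vtil :: "nat \<Rightarrow> (nat \<Rightarrow> nat \<Rightarrow> real) \<Rightarrow> (nat \<Rightarrow> nat \<Rightarrow> real) \<Rightarrow> (nat \<Rightarrow> real)
    \<Rightarrow> (nat \<Rightarrow> real) \<Rightarrow> (nat \<Rightarrow> real) \<Rightarrow> (nat \<Rightarrow> real) \<Rightarrow> nat \<Rightarrow> real" where
  "vtil M K L x vref p q k =
     (\<Sum>j<3*M. Xmat x k j * vref j)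
   + (\<Sum>j<3*M. \<Sum>l<3*M. Xmat x k j * K j l * (\<Sum>k'<M. Xmat x k' l * p k'))
   + (\<Sum>j<3*M. \<Sum>l<3*M. Xmat x k j * L j l * (\<Sum>k'<M. Xmat x k' l * q k'))"

text \<open>Gaussian random vector (Z_0,...,Z_{d-1}) with mean 0 and covariance S:
  every nontrivial linear combination is N(0, a^T S a) (sigma = standard deviation).\<close>
definition gaussian_vec :: "'w measure \<Rightarrow> nat \<Rightarrow> (nat \<Rightarrow> nat \<Rightarrow> real) \<Rightarrow> (nat \<Rightarrow> 'w \<Rightarrow> real) \<Rightarrow> bool" where
  "gaussian_vec P d S Z \<longleftrightarrow>
     (\<forall>i<d. Z i \<in> borel_measurable P) \<and>
     (\<forall>a::nat \<Rightarrow> real. (\<exists>i<d. a i \<noteq> 0) \<longrightarrow>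
        distributed P lborel (\<lambda>\<omega>. \<Sum>i<d. a i * Z i \<omega>)
          (\<lambda>y. ennreal (normal_density 0 (sqrt (\<Sum>i<d. \<Sum>j<d. a i * S i j * a j)) y)))"

definition pos_def_mat :: "nat \<Rightarrow> (nat \<Rightarrow> nat \<Rightarrow> real) \<Rightarrow> bool" where
  "pos_def_mat d S \<longleftrightarrow> (\<forall>i<d. \<forall>j<d. S i j = S j i) \<and>
     (\<forall>a::nat \<Rightarrow> real. (\<exists>i<d. a i \<noteq> 0) \<longrightarrow> (\<Sum>i<d. \<Sum>j<d. a i * S i j * a j) > 0)"

definition vecM :: "nat \<Rightarrow> (nat \<Rightarrow> real) measure" where
  "vecM d = PiM {..<d} (\<lambda>_. borel)"

definition fmT :: "nat \<Rightarrow> (nat \<Rightarrow> nat \<Rightarrow> real) \<Rightarrow> (nat \<Rightarrow> nat \<Rightarrow> real)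
   \<Rightarrow> (nat \<Rightarrow> 'w \<Rightarrow> nat \<Rightarrow> real) \<Rightarrow> (nat \<Rightarrow> 'w \<Rightarrow> nat \<Rightarrow> real) \<Rightarrow> (nat \<Rightarrow> 'w \<Rightarrow> nat \<Rightarrow> real)
   \<Rightarrow> (nat \<Rightarrow> 'w \<Rightarrow> nat \<Rightarrow> real) \<Rightarrow> (nat \<Rightarrow> real) \<Rightarrow> nat \<Rightarrow> nat \<Rightarrow> (nat \<Rightarrow> real) \<Rightarrow> 'w \<Rightarrow> real" where
  "fmT M K L vref p q n xs m T x \<omega> =
     (1 / real T) * (\<Sum>t\<in>{1..T}.
        ((vtil M K L xs (vref t \<omega>) (p t \<omega>) (q t \<omega>) m + n t \<omega> m)
         - vtil M K L x (vref t \<omega>) (p t \<omega>) (q t \<omega>) m)\<^sup>2)"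

end

theory Submission
  imports Defs "HOL-Library.Discrete_Functions"
begin

(* Write xs for the true connection x*.  For a candidate x, the residual of load m at time t is the
   noise n_m(t) plus the model mismatch D_x(t) = v_m(t,xs) - v_m(t,x), so f_{m,T}(x) is the mean of
   (n_m + D_x)^2.  This is at least the mean of n_m^2 plus twice the mean of n_m D_x, with equality
   at x = xs.  The noise is i.i.d. Gaussian and independent of the inputs, so the sequences n_m(t)^2
   and n_m(t) D_x(t) are pairwise independent with bounded second moments and means sigma^2 and 0.
   A strong law of large numbers for such sequences (Chebyshev along the squares T = k^2 with
   Borel-Cantelli, monotone interpolation between squares for nonnegative summands, applied to
   positive and negative parts) makes both means converge almost surely; as there are finitely many
   candidates this holds for all of them at once, whence liminf f(x) >= sigma^2 = lim f(xs).
   For (b): the blocks of U1, U2 belonging to a three-phase load are (1/3) 1 and 0, so the matching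
   columns of K and L are constant within the block; such a load enters v_m only through
   x_k^1 + x_k^2 + x_k^3 = 1, whence v_m(t,x) = v_m(t,xs). *)

section \<open>A strong law of large numbers for pairwise independent sequences\<close>

lemma (in prob_space) integrable_mult_of_square_integrable:
  fixes f g :: "'a \<Rightarrow> real"
  assumes "f \<in> borel_measurable M" "g \<in> borel_measurable M"
    and "integrable M (\<lambda>\<omega>. (f \<omega>)\<^sup>2)" "integrable M (\<lambda>\<omega>. (g \<omega>)\<^sup>2)"
  shows "integrable M (\<lambda>\<omega>. f \<omega> * g \<omega>)"
proof (rule Bochner_Integration.integrable_bound[where f="\<lambda>\<omega>. (f \<omega>)\<^sup>2 + (g \<omega>)\<^sup>2"])
  have "\<bar>a * b\<bar> \<le> a\<^sup>2 + b\<^sup>2" for a b :: real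
  proof -
    have "2 * \<bar>a\<bar> * \<bar>b\<bar> \<le> a\<^sup>2 + b\<^sup>2" using sum_squares_bound[of "\<bar>a\<bar>" "\<bar>b\<bar>"] by simp
    moreover have "0 \<le> \<bar>a\<bar> * \<bar>b\<bar>" by simp
    ultimately show ?thesis unfolding abs_mult by linarith
  qed
  then show "AE \<omega> in M. norm (f \<omega> * g \<omega>) \<le> norm ((f \<omega>)\<^sup>2 + (g \<omega>)\<^sup>2)"
    by simp
qed (use assms in auto)

lemma (in prob_space) expectation_centered_sum_square_le:
  fixes X :: "nat \<Rightarrow> 'a \<Rightarrow> real" and B :: real
  assumes meas: "\<And>t. t \<ge> 1 \<Longrightarrow> X t \<in> borel_measurable M"
    and sq_int: "\<And>t. t \<ge> 1 \<Longrightarrow> integrable M (\<lambda>\<omega>. (X t \<omega>)\<^sup>2)"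
    and bnd: "\<And>t. t \<ge> 1 \<Longrightarrow> expectation (\<lambda>\<omega>. (X t \<omega>)\<^sup>2) \<le> B"
    and uncorr: "\<And>s t. s \<ge> 1 \<Longrightarrow> t \<ge> 1 \<Longrightarrow> s \<noteq> t \<Longrightarrow>
      expectation (\<lambda>\<omega>. X s \<omega> * X t \<omega>) = expectation (X s) * expectation (X t)"
  shows "integrable M (\<lambda>\<omega>. (\<Sum>t\<in>{1..T}. X t \<omega> - expectation (X t))\<^sup>2)"
    and "expectation (\<lambda>\<omega>. (\<Sum>t\<in>{1..T}. X t \<omega> - expectation (X t))\<^sup>2) \<le> real T * B"
proof -
  define \<mu> where "\<mu> t = expectation (X t)" for t
  have intX: "integrable M (X t)" if "t \<ge> 1" for t
    using square_integrable_imp_integrable[OF meas sq_int] that by blast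
  have intXX: "integrable M (\<lambda>\<omega>. X s \<omega> * X t \<omega>)" if "s \<ge> 1" "t \<ge> 1" for s t
    using integrable_mult_of_square_integrable meas sq_int that by blast
  have cov_eq: "(\<lambda>\<omega>. (X s \<omega> - \<mu> s) * (X t \<omega> - \<mu> t))
      = (\<lambda>\<omega>. X s \<omega> * X t \<omega> - \<mu> t * X s \<omega> - \<mu> s * X t \<omega> + \<mu> s * \<mu> t)" for s t
    by (auto simp: algebra_simps)
  have int_cov: "integrable M (\<lambda>\<omega>. (X s \<omega> - \<mu> s) * (X t \<omega> - \<mu> t))" if "s \<ge> 1" "t \<ge> 1" for s t
    unfolding cov_eq using intXX intX that by auto
  have cov: "expectation (\<lambda>\<omega>. (X s \<omega> - \<mu> s) * (X t \<omega> - \<mu> t))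
      = expectation (\<lambda>\<omega>. X s \<omega> * X t \<omega>) - \<mu> s * \<mu> t" if "s \<ge> 1" "t \<ge> 1" for s t
    unfolding cov_eq using intXX intX that by (simp add: \<mu>_def prob_space)
  have square_sum: "(\<Sum>t\<in>{1..T}. X t \<omega> - \<mu> t)\<^sup>2
      = (\<Sum>s\<in>{1..T}. \<Sum>t\<in>{1..T}. (X s \<omega> - \<mu> s) * (X t \<omega> - \<mu> t))" for \<omega>
    by (simp add: power2_eq_square sum_product)
  show "integrable M (\<lambda>\<omega>. (\<Sum>t\<in>{1..T}. X t \<omega> - expectation (X t))\<^sup>2)"
    unfolding \<mu>_def[symmetric] square_sum using int_cov by (intro Bochner_Integration.integrable_sum) auto
  have "expectation (\<lambda>\<omega>. (\<Sum>t\<in>{1..T}. X t \<omega> - \<mu> t)\<^sup>2)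
      = (\<Sum>s\<in>{1..T}. \<Sum>t\<in>{1..T}. expectation (\<lambda>\<omega>. (X s \<omega> - \<mu> s) * (X t \<omega> - \<mu> t)))"
    unfolding square_sum using int_cov
    by (subst Bochner_Integration.integral_sum)
       (auto intro: sum.cong Bochner_Integration.integral_sum)
  also have "\<dots> = (\<Sum>s\<in>{1..T}. expectation (\<lambda>\<omega>. (X s \<omega>)\<^sup>2) - (\<mu> s)\<^sup>2)"
  proof (rule sum.cong[OF refl])
    fix s assume s: "s \<in> {1..T}"
    have "(\<Sum>t\<in>{1..T}. expectation (\<lambda>\<omega>. (X s \<omega> - \<mu> s) * (X t \<omega> - \<mu> t)))
        = (\<Sum>t\<in>{1..T}. if t = s then expectation (\<lambda>\<omega>. (X s \<omega>)\<^sup>2) - (\<mu> s)\<^sup>2 else 0)"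
      using s cov uncorr by (intro sum.cong refl) (auto simp: \<mu>_def power2_eq_square)
    then show "(\<Sum>t\<in>{1..T}. expectation (\<lambda>\<omega>. (X s \<omega> - \<mu> s) * (X t \<omega> - \<mu> t)))
        = expectation (\<lambda>\<omega>. (X s \<omega>)\<^sup>2) - (\<mu> s)\<^sup>2"
      using s by simp
  qed
  also have "\<dots> \<le> (\<Sum>s\<in>{1..T}. B)"
    using bnd by (intro sum_mono) (smt (verit) atLeastAtMost_iff zero_le_power2)
  finally show "expectation (\<lambda>\<omega>. (\<Sum>t\<in>{1..T}. X t \<omega> - expectation (X t))\<^sup>2) \<le> real T * B"
    by (simp add: \<mu>_def)
qed

lemma (in prob_space) measure_square_ge_le:
  fixes Y :: "'a \<Rightarrow> real"
  assumes "integrable M (\<lambda>\<omega>. (Y \<omega>)\<^sup>2)" "expectation (\<lambda>\<omega>. (Y \<omega>)\<^sup>2) \<le> real T * B" "\<epsilon> > 0" "T > 0"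
  shows "measure M {\<omega>\<in>space M. (\<epsilon> * real T)\<^sup>2 \<le> (Y \<omega>)\<^sup>2} \<le> B / \<epsilon>\<^sup>2 * inverse (real T)"
proof -
  have "measure M {\<omega>\<in>space M. (\<epsilon> * real T)\<^sup>2 \<le> (Y \<omega>)\<^sup>2} \<le> expectation (\<lambda>\<omega>. (Y \<omega>)\<^sup>2) / (\<epsilon> * real T)\<^sup>2"
    using assms by (intro integral_Markov_inequality_measure) auto
  also have "\<dots> \<le> real T * B / (\<epsilon> * real T)\<^sup>2"
    using assms(2) by (intro divide_right_mono) auto
  also have "\<dots> = B / \<epsilon>\<^sup>2 * inverse (real T)"
    using assms(3,4) by (simp add: field_simps power2_eq_square)
  finally show ?thesis .
qed

lemma (in prob_space) AE_eventually_small_along_squares: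
  fixes S :: "nat \<Rightarrow> 'a \<Rightarrow> real" and B \<epsilon> :: real
  assumes meas: "\<And>T. S T \<in> borel_measurable M"
    and int: "\<And>T. integrable M (\<lambda>\<omega>. (S T \<omega>)\<^sup>2)"
    and bnd: "\<And>T. expectation (\<lambda>\<omega>. (S T \<omega>)\<^sup>2) \<le> real T * B"
    and "\<epsilon> > 0"
  shows "AE \<omega> in M. eventually (\<lambda>k. \<bar>S ((Suc k)\<^sup>2) \<omega>\<bar> / real ((Suc k)\<^sup>2) < \<epsilon>) sequentially"
proof -
  define A where "A k = {\<omega>\<in>space M. (\<epsilon> * real ((Suc k)\<^sup>2))\<^sup>2 \<le> (S ((Suc k)\<^sup>2) \<omega>)\<^sup>2}" for k
  have A_sets: "A k \<in> sets M" for k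
    unfolding A_def using meas by measurable
  have A_le: "measure M (A k) \<le> B / \<epsilon>\<^sup>2 * inverse (real (Suc k) ^ 2)" for k
    using measure_square_ge_le[OF int bnd \<open>\<epsilon> > 0\<close>, of "(Suc k)\<^sup>2"] by (simp add: A_def)
  have "summable (\<lambda>k. B / \<epsilon>\<^sup>2 * inverse (real (Suc k) ^ 2))"
    using inverse_power_summable[of 2, where 'a=real]
    by (intro summable_mult, subst summable_Suc_iff) simp
  then have "summable (\<lambda>k. measure M (A k))"
    by (rule summable_comparison_test[rotated]) (use A_le in auto)
  then have "AE \<omega> in M. eventually (\<lambda>k. \<omega> \<in> space M - A k) sequentially"
    by (intro borel_cantelli_AE1) (auto simp: A_sets less_top[symmetric])
  moreover have small: "\<bar>s\<bar> / real T < \<epsilon>" if "s\<^sup>2 < (\<epsilon> * real T)\<^sup>2" "T > 0"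
    for s :: real and T :: nat
  proof -
    have "\<bar>s\<bar> < \<epsilon> * real T"
      using power2_less_imp_less[of "\<bar>s\<bar>" "\<epsilon> * real T"] that \<open>\<epsilon> > 0\<close> by simp
    then show ?thesis using that(2) by (simp add: pos_divide_less_eq)
  qed
  ultimately show ?thesis
  proof (elim eventually_mono)
    fix \<omega> k assume "\<omega> \<in> space M - A k"
    then have "(S ((Suc k)\<^sup>2) \<omega>)\<^sup>2 < (\<epsilon> * real ((Suc k)\<^sup>2))\<^sup>2"
      unfolding A_def by (auto simp only: Diff_iff mem_Collect_eq not_le)
    then show "\<bar>S ((Suc k)\<^sup>2) \<omega>\<bar> / real ((Suc k)\<^sup>2) < \<epsilon>"
      by (rule small) simp
  qed
qed

lemma (in prob_space) AE_tendsto_zero_along_squares: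
  fixes S :: "nat \<Rightarrow> 'a \<Rightarrow> real" and B :: real
  assumes meas: "\<And>T. S T \<in> borel_measurable M"
    and int: "\<And>T. integrable M (\<lambda>\<omega>. (S T \<omega>)\<^sup>2)"
    and bnd: "\<And>T. expectation (\<lambda>\<omega>. (S T \<omega>)\<^sup>2) \<le> real T * B"
  shows "AE \<omega> in M. (\<lambda>k. S (k\<^sup>2) \<omega> / real (k\<^sup>2)) \<longlonglongrightarrow> 0"
proof -
  have "AE \<omega> in M. \<forall>j::nat. eventually
      (\<lambda>k. \<bar>S ((Suc k)\<^sup>2) \<omega>\<bar> / real ((Suc k)\<^sup>2) < inverse (real (Suc j))) sequentially"
    by (subst AE_all_countable) (intro allI AE_eventually_small_along_squares[OF meas int bnd], simp)
  then show ?thesis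
  proof (rule eventually_mono)
    fix \<omega> assume small: "\<forall>j::nat. eventually
        (\<lambda>k. \<bar>S ((Suc k)\<^sup>2) \<omega>\<bar> / real ((Suc k)\<^sup>2) < inverse (real (Suc j))) sequentially"
    have "(\<lambda>k. S ((Suc k)\<^sup>2) \<omega> / real ((Suc k)\<^sup>2)) \<longlonglongrightarrow> 0"
    proof (rule tendsto_iff[THEN iffD2], intro allI impI)
      fix e :: real assume "e > 0"
      then obtain j where j: "inverse (real (Suc j)) < e" using reals_Archimedean by blast
      from small have "eventually
          (\<lambda>k. \<bar>S ((Suc k)\<^sup>2) \<omega>\<bar> / real ((Suc k)\<^sup>2) < inverse (real (Suc j))) sequentially" ..
      then show "eventually (\<lambda>k. dist (S ((Suc k)\<^sup>2) \<omega> / real ((Suc k)\<^sup>2)) 0 < e) sequentially"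
      proof (rule eventually_mono)
        fix k assume "\<bar>S ((Suc k)\<^sup>2) \<omega>\<bar> / real ((Suc k)\<^sup>2) < inverse (real (Suc j))"
        with j show "dist (S ((Suc k)\<^sup>2) \<omega> / real ((Suc k)\<^sup>2)) 0 < e"
          unfolding dist_real_def abs_divide abs_of_nat diff_zero by linarith
      qed
    qed
    then show "(\<lambda>k. S (k\<^sup>2) \<omega> / real (k\<^sup>2)) \<longlonglongrightarrow> 0"
      by (rule LIMSEQ_imp_Suc)
  qed
qed

lemma sum_centered_le_add:
  fixes x \<mu> :: "nat \<Rightarrow> real"
  assumes "a \<le> b" and x: "\<And>t. t \<ge> 1 \<Longrightarrow> 0 \<le> x t" and \<mu>: "\<And>t. t \<ge> 1 \<Longrightarrow> \<mu> t \<le> C"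
  shows "(\<Sum>t\<in>{1..a}. x t - \<mu> t) \<le> (\<Sum>t\<in>{1..b}. x t - \<mu> t) + real (b - a) * C"
proof -
  have "{1..b} = {1..a} \<union> {Suc a..b}" using \<open>a \<le> b\<close> by auto
  then have split: "(\<Sum>t\<in>{1..b}. x t - \<mu> t) = (\<Sum>t\<in>{1..a}. x t - \<mu> t) + (\<Sum>t\<in>{Suc a..b}. x t - \<mu> t)"
    by (simp add: sum.union_disjoint)
  have "- (real (b - a) * C) \<le> (\<Sum>t\<in>{Suc a..b}. x t - \<mu> t)"
  proof -
    have "(\<Sum>t\<in>{Suc a..b}. - C) \<le> (\<Sum>t\<in>{Suc a..b}. x t - \<mu> t)"
    proof (rule sum_mono)
      fix t assume "t \<in> {Suc a..b}"
      then have "t \<ge> 1" by simp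
      then show "- C \<le> x t - \<mu> t" using x[of t] \<mu>[of t] by linarith
    qed
    then show ?thesis by simp
  qed
  then show ?thesis using split by linarith
qed

lemma filterlim_floor_sqrt_at_top: "filterlim floor_sqrt at_top at_top"
  unfolding filterlim_at_top
proof
  fix Z :: nat
  show "eventually (\<lambda>T. Z \<le> floor_sqrt T) at_top"
    using eventually_ge_at_top[of "Z\<^sup>2"] by eventually_elim (rule le_floor_sqrtI)
qed

lemma abs_sum_centered_le_between_squares:
  fixes x \<mu> :: "nat \<Rightarrow> real"
  assumes x: "\<And>t. t \<ge> 1 \<Longrightarrow> 0 \<le> x t" and \<mu>: "\<And>t. t \<ge> 1 \<Longrightarrow> \<mu> t \<le> C" and "0 \<le> C"
    and n: "n\<^sup>2 \<le> T" "T < (Suc n)\<^sup>2"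
  shows "\<bar>\<Sum>t\<in>{1..T}. x t - \<mu> t\<bar>
    \<le> \<bar>\<Sum>t\<in>{1..(Suc n)\<^sup>2}. x t - \<mu> t\<bar> + \<bar>\<Sum>t\<in>{1..n\<^sup>2}. x t - \<mu> t\<bar> + (2 * real n + 1) * C"
proof -
  define S where "S T = (\<Sum>t\<in>{1..T}. x t - \<mu> t)" for T
  have gap: "real ((Suc n)\<^sup>2 - T) \<le> 2 * real n + 1" "real (T - n\<^sup>2) \<le> 2 * real n + 1"
  proof -
    have "(Suc n)\<^sup>2 - T \<le> (Suc n)\<^sup>2 - n\<^sup>2" "T - n\<^sup>2 \<le> (Suc n)\<^sup>2 - n\<^sup>2" using n by auto
    moreover have "real ((Suc n)\<^sup>2 - n\<^sup>2) = 2 * real n + 1"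
      by (simp add: power2_eq_square algebra_simps)
    ultimately show "real ((Suc n)\<^sup>2 - T) \<le> 2 * real n + 1" "real (T - n\<^sup>2) \<le> 2 * real n + 1"
      by (metis of_nat_le_iff)+
  qed
  have "S T \<le> S ((Suc n)\<^sup>2) + real ((Suc n)\<^sup>2 - T) * C"
    unfolding S_def using n x \<mu> by (intro sum_centered_le_add) auto
  also have "\<dots> \<le> S ((Suc n)\<^sup>2) + (2 * real n + 1) * C"
    using \<open>0 \<le> C\<close> gap by (intro add_left_mono mult_right_mono) auto
  finally have upper: "S T \<le> S ((Suc n)\<^sup>2) + (2 * real n + 1) * C" .
  have "S (n\<^sup>2) \<le> S T + real (T - n\<^sup>2) * C"
    unfolding S_def using n x \<mu> by (intro sum_centered_le_add) auto
  also have "\<dots> \<le> S T + (2 * real n + 1) * C"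
    using \<open>0 \<le> C\<close> gap by (intro add_left_mono mult_right_mono) auto
  finally have "S (n\<^sup>2) \<le> S T + (2 * real n + 1) * C" .
  with upper show ?thesis
    unfolding S_def[symmetric] by linarith
qed

lemma centered_mean_tendsto_zero_of_squares:
  fixes x \<mu> :: "nat \<Rightarrow> real"
  assumes x: "\<And>t. t \<ge> 1 \<Longrightarrow> 0 \<le> x t" and \<mu>: "\<And>t. t \<ge> 1 \<Longrightarrow> \<mu> t \<le> C" and "0 \<le> C"
    and squares: "(\<lambda>k. (\<Sum>t\<in>{1..k\<^sup>2}. x t - \<mu> t) / real (k\<^sup>2)) \<longlonglongrightarrow> 0"
  shows "(\<lambda>T. (\<Sum>t\<in>{1..T}. x t - \<mu> t) / real T) \<longlonglongrightarrow> 0"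
proof -
  define S where "S T = (\<Sum>t\<in>{1..T}. x t - \<mu> t)" for T
  define a where "a k = S (k\<^sup>2) / real (k\<^sup>2)" for k
  define g where "g n = \<bar>a (Suc n)\<bar> * (1 + inverse (real n))\<^sup>2 + \<bar>a n\<bar>
      + C * (2 * inverse (real n) + (inverse (real n))\<^sup>2)" for n
  have a: "a \<longlonglongrightarrow> 0"
    using squares unfolding a_def[abs_def] S_def .
  have "g \<longlonglongrightarrow> 0 * (1 + 0)\<^sup>2 + 0 + C * (2 * 0 + 0\<^sup>2)"
    unfolding g_def using LIMSEQ_Suc[OF a] a lim_inverse_n
    by (intro tendsto_add tendsto_mult tendsto_power tendsto_rabs_zero tendsto_const) auto
  then have g_lim: "(\<lambda>T. g (floor_sqrt T)) \<longlonglongrightarrow> 0"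
    using filterlim_compose[OF _ filterlim_floor_sqrt_at_top] by simp
  have g_eq: "(\<bar>S ((Suc n)\<^sup>2)\<bar> + \<bar>S (n\<^sup>2)\<bar> + (2 * real n + 1) * C) / (real n)\<^sup>2 = g n" if "n \<ge> 1" for n
  proof -
    define r where "r = real n"
    have r: "r > 0" "1 + inverse r = (r + 1) / r"
      using that by (simp_all add: r_def field_simps)
    have "\<bar>S ((Suc n)\<^sup>2)\<bar> / (r + 1)\<^sup>2 * (1 + inverse r)\<^sup>2 = \<bar>S ((Suc n)\<^sup>2)\<bar> / r\<^sup>2"
      using r by (simp add: power_divide)
    moreover have "(2 * r + 1) * C / r\<^sup>2 = C * (2 * inverse r + (inverse r)\<^sup>2)"
      using r by (simp add: field_simps power2_eq_square)
    ultimately show ?thesis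
      by (simp add: g_def a_def r_def abs_divide add_divide_distrib add.commute)
  qed
  have bound: "\<bar>S T / real T\<bar> \<le> g (floor_sqrt T)" if "T \<ge> 1" for T
  proof -
    define n where "n = floor_sqrt T"
    have n: "n\<^sup>2 \<le> T" "T < (Suc n)\<^sup>2" "n \<ge> 1"
      using that Suc_floor_sqrt_power2_gt[of T] by (auto simp: n_def le_floor_sqrtI)
    have "(real n)\<^sup>2 \<le> real T" "real n > 0"
      using n by (simp_all flip: of_nat_power)
    with abs_sum_centered_le_between_squares[OF x \<mu> \<open>0 \<le> C\<close> n(1,2)] \<open>0 \<le> C\<close>
    have "\<bar>S T\<bar> / real T \<le> (\<bar>S ((Suc n)\<^sup>2)\<bar> + \<bar>S (n\<^sup>2)\<bar> + (2 * real n + 1) * C) / (real n)\<^sup>2"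
      unfolding S_def by (intro frac_le) auto
    then have "\<bar>S T\<bar> / real T \<le> g n"
      unfolding g_eq[OF n(3)] .
    then show ?thesis
      unfolding n_def abs_divide abs_of_nat .
  qed
  have "eventually (\<lambda>T. norm (S T / real T) \<le> g (floor_sqrt T)) sequentially"
    using eventually_ge_at_top[of 1] by eventually_elim (simp only: real_norm_def bound)
  from Lim_null_comparison[OF this g_lim] show ?thesis
    unfolding S_def .
qed

lemma (in prob_space) AE_centered_mean_tendsto_zero_nonneg:
  fixes X :: "nat \<Rightarrow> 'a \<Rightarrow> real" and B :: real
  assumes meas: "\<And>t. t \<ge> 1 \<Longrightarrow> X t \<in> borel_measurable M"
    and nonneg: "\<And>t \<omega>. t \<ge> 1 \<Longrightarrow> 0 \<le> X t \<omega>"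
    and sq_int: "\<And>t. t \<ge> 1 \<Longrightarrow> integrable M (\<lambda>\<omega>. (X t \<omega>)\<^sup>2)"
    and bnd: "\<And>t. t \<ge> 1 \<Longrightarrow> expectation (\<lambda>\<omega>. (X t \<omega>)\<^sup>2) \<le> B"
    and uncorr: "\<And>s t. s \<ge> 1 \<Longrightarrow> t \<ge> 1 \<Longrightarrow> s \<noteq> t \<Longrightarrow>
      expectation (\<lambda>\<omega>. X s \<omega> * X t \<omega>) = expectation (X s) * expectation (X t)"
  shows "AE \<omega> in M. (\<lambda>T. (\<Sum>t\<in>{1..T}. X t \<omega> - expectation (X t)) / real T) \<longlonglongrightarrow> 0"
proof -
  have mean_le: "expectation (X t) \<le> 1 + B" if t: "t \<ge> 1" for t
  proof -
    have "expectation (X t) \<le> expectation (\<lambda>\<omega>. 1 + (X t \<omega>)\<^sup>2)"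
    proof (rule integral_mono)
      show "integrable M (X t)"
        using square_integrable_imp_integrable[OF meas sq_int] t by blast
      show "X t \<omega> \<le> 1 + (X t \<omega>)\<^sup>2" for \<omega>
        using sum_squares_bound[of 1 "X t \<omega>"] nonneg[OF t, of \<omega>] by (simp add: power2_eq_square)
    qed (use sq_int t in auto)
    then show ?thesis using bnd[OF t] sq_int[OF t] by (simp add: prob_space)
  qed
  have "0 \<le> expectation (X 1)"
    using nonneg[of 1] by (intro integral_nonneg_AE) simp
  then have "0 \<le> 1 + B"
    using mean_le[of 1] by simp
  moreover have "AE \<omega> in M. (\<lambda>k. (\<Sum>t\<in>{1..k\<^sup>2}. X t \<omega> - expectation (X t)) / real (k\<^sup>2)) \<longlonglongrightarrow> 0"
  proof (rule AE_tendsto_zero_along_squares[where B=B])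
    show "(\<lambda>\<omega>. \<Sum>t\<in>{1..T}. X t \<omega> - expectation (X t)) \<in> borel_measurable M" for T
      using meas by (intro borel_measurable_sum borel_measurable_diff) auto
    show "integrable M (\<lambda>\<omega>. (\<Sum>t\<in>{1..T}. X t \<omega> - expectation (X t))\<^sup>2)"
      and "expectation (\<lambda>\<omega>. (\<Sum>t\<in>{1..T}. X t \<omega> - expectation (X t))\<^sup>2) \<le> real T * B" for T
      using expectation_centered_sum_square_le[where X=X and B=B and T=T] meas sq_int bnd uncorr by blast+
  qed
  ultimately show ?thesis
    by (elim AE_mp, intro AE_I2 impI centered_mean_tendsto_zero_of_squares[where C="1 + B"])
       (auto intro: nonneg mean_le)
qed

lemma (in prob_space) AE_centered_mean_tendsto_zero_comp:
  fixes X :: "nat \<Rightarrow> 'a \<Rightarrow> real" and \<phi> :: "real \<Rightarrow> real" and B :: real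
  assumes meas: "\<And>t. t \<ge> 1 \<Longrightarrow> X t \<in> borel_measurable M"
    and indep: "\<And>s t. s \<ge> 1 \<Longrightarrow> t \<ge> 1 \<Longrightarrow> s \<noteq> t \<Longrightarrow> indep_var borel (X s) borel (X t)"
    and sq_int: "\<And>t. t \<ge> 1 \<Longrightarrow> integrable M (\<lambda>\<omega>. (X t \<omega>)\<^sup>2)"
    and bnd: "\<And>t. t \<ge> 1 \<Longrightarrow> expectation (\<lambda>\<omega>. (X t \<omega>)\<^sup>2) \<le> B"
    and \<phi>: "\<phi> \<in> borel_measurable borel" "\<And>x. 0 \<le> \<phi> x" "\<And>x. (\<phi> x)\<^sup>2 \<le> x\<^sup>2"
  shows "\<And>t. t \<ge> 1 \<Longrightarrow> integrable M (\<lambda>\<omega>. \<phi> (X t \<omega>))"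
    and "AE \<omega> in M. (\<lambda>T. (\<Sum>t\<in>{1..T}. \<phi> (X t \<omega>) - expectation (\<lambda>\<omega>. \<phi> (X t \<omega>))) / real T) \<longlonglongrightarrow> 0"
proof -
  have \<phi>X_meas: "(\<lambda>\<omega>. \<phi> (X t \<omega>)) \<in> borel_measurable M" if "t \<ge> 1" for t
    using measurable_compose[OF meas[OF that] \<phi>(1)] by simp
  have \<phi>X_sq_int: "integrable M (\<lambda>\<omega>. (\<phi> (X t \<omega>))\<^sup>2)" if "t \<ge> 1" for t
  proof (rule Bochner_Integration.integrable_bound[OF sq_int[OF that]])
    show "(\<lambda>\<omega>. (\<phi> (X t \<omega>))\<^sup>2) \<in> borel_measurable M"
      using \<phi>X_meas[OF that] by measurable
    have "(\<phi> (X t \<omega>))\<^sup>2 \<le> (X t \<omega>)\<^sup>2" for \<omega>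
      by (rule \<phi>(3))
    then show "AE \<omega> in M. norm ((\<phi> (X t \<omega>))\<^sup>2) \<le> norm ((X t \<omega>)\<^sup>2)"
      by simp
  qed
  show \<phi>X_int: "integrable M (\<lambda>\<omega>. \<phi> (X t \<omega>))" if "t \<ge> 1" for t
    using square_integrable_imp_integrable[OF \<phi>X_meas[OF that] \<phi>X_sq_int[OF that]] .
  show "AE \<omega> in M. (\<lambda>T. (\<Sum>t\<in>{1..T}. \<phi> (X t \<omega>) - expectation (\<lambda>\<omega>. \<phi> (X t \<omega>))) / real T) \<longlonglongrightarrow> 0"
  proof (rule AE_centered_mean_tendsto_zero_nonneg[where B=B])
    show "expectation (\<lambda>\<omega>. (\<phi> (X t \<omega>))\<^sup>2) \<le> B" if "t \<ge> 1" for t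
    proof -
      have "expectation (\<lambda>\<omega>. (\<phi> (X t \<omega>))\<^sup>2) \<le> expectation (\<lambda>\<omega>. (X t \<omega>)\<^sup>2)"
        by (rule integral_mono) (use \<phi>X_sq_int sq_int \<phi>(3) that in simp_all)
      then show ?thesis using bnd[OF that] by simp
    qed
    show "expectation (\<lambda>\<omega>. \<phi> (X s \<omega>) * \<phi> (X t \<omega>))
        = expectation (\<lambda>\<omega>. \<phi> (X s \<omega>)) * expectation (\<lambda>\<omega>. \<phi> (X t \<omega>))"
      if "s \<ge> 1" "t \<ge> 1" "s \<noteq> t" for s t
    proof -
      have "indep_var borel (\<lambda>\<omega>. \<phi> (X s \<omega>)) borel (\<lambda>\<omega>. \<phi> (X t \<omega>))"
        using indep_var_compose[OF indep[OF that] \<phi>(1) \<phi>(1)] by (simp add: comp_def)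
      from indep_var_lebesgue_integral[OF this \<phi>X_int \<phi>X_int] show ?thesis
        using that by simp
    qed
  qed (use \<phi>X_meas \<phi>X_sq_int \<phi>(2) in simp_all)
qed

lemma mean_tendsto_of_centered:
  fixes x :: "nat \<Rightarrow> real"
  assumes "(\<lambda>T. (\<Sum>t\<in>{1..T}. x t - \<mu>) / real T) \<longlonglongrightarrow> 0"
  shows "(\<lambda>T. (\<Sum>t\<in>{1..T}. x t) / real T) \<longlonglongrightarrow> \<mu>"
proof -
  have "(\<Sum>t\<in>{1..T}. x t - \<mu>) / real T + \<mu> = (\<Sum>t\<in>{1..T}. x t) / real T" if "T \<ge> 1" for T
    using that by (simp add: sum_subtractf field_simps)
  then have "eventually (\<lambda>T. (\<Sum>t\<in>{1..T}. x t - \<mu>) / real T + \<mu> = (\<Sum>t\<in>{1..T}. x t) / real T) sequentially"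
    using eventually_ge_at_top[of 1] by (rule eventually_mono[rotated])
  with tendsto_add[OF assms tendsto_const[of \<mu>]] show ?thesis
    by (simp add: Lim_transform_eventually)
qed

text \<open>The positive and negative parts of a pairwise independent sequence are again pairwise
  independent and nonnegative, so the law of large numbers for nonnegative summands applies to each.\<close>
lemma (in prob_space) AE_mean_tendsto_pairwise_indep:
  fixes X :: "nat \<Rightarrow> 'a \<Rightarrow> real" and B \<mu> :: real
  assumes meas: "\<And>t. t \<ge> 1 \<Longrightarrow> X t \<in> borel_measurable M"
    and indep: "\<And>s t. s \<ge> 1 \<Longrightarrow> t \<ge> 1 \<Longrightarrow> s \<noteq> t \<Longrightarrow> indep_var borel (X s) borel (X t)"
    and sq_int: "\<And>t. t \<ge> 1 \<Longrightarrow> integrable M (\<lambda>\<omega>. (X t \<omega>)\<^sup>2)"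
    and bnd: "\<And>t. t \<ge> 1 \<Longrightarrow> expectation (\<lambda>\<omega>. (X t \<omega>)\<^sup>2) \<le> B"
    and mean: "\<And>t. t \<ge> 1 \<Longrightarrow> expectation (X t) = \<mu>"
  shows "AE \<omega> in M. (\<lambda>T. (\<Sum>t\<in>{1..T}. X t \<omega>) / real T) \<longlonglongrightarrow> \<mu>"
proof -
  define Xp where "Xp t \<omega> = max 0 (X t \<omega>)" for t \<omega>
  define Xn where "Xn t \<omega> = max 0 (- X t \<omega>)" for t \<omega>
  have sq: "(max 0 x)\<^sup>2 \<le> x\<^sup>2" "(max 0 (- x))\<^sup>2 \<le> x\<^sup>2" for x :: real
    by (auto simp: max_def)
  have max_pos_meas: "(\<lambda>x::real. max 0 x) \<in> borel_measurable borel"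
    by (intro borel_measurable_max) auto
  have max_neg_meas: "(\<lambda>x::real. max 0 (- x)) \<in> borel_measurable borel"
    by (intro borel_measurable_max borel_measurable_uminus) auto
  have pos: "\<And>t. t \<ge> 1 \<Longrightarrow> integrable M (Xp t)"
    "AE \<omega> in M. (\<lambda>T. (\<Sum>t\<in>{1..T}. Xp t \<omega> - expectation (Xp t)) / real T) \<longlonglongrightarrow> 0"
    unfolding Xp_def
    by (rule AE_centered_mean_tendsto_zero_comp[OF meas indep sq_int bnd max_pos_meas]; simp add: sq)+
  have neg: "\<And>t. t \<ge> 1 \<Longrightarrow> integrable M (Xn t)"
    "AE \<omega> in M. (\<lambda>T. (\<Sum>t\<in>{1..T}. Xn t \<omega> - expectation (Xn t)) / real T) \<longlonglongrightarrow> 0"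
    unfolding Xn_def
    by (rule AE_centered_mean_tendsto_zero_comp[OF meas indep sq_int bnd max_neg_meas]; simp add: sq)+
  have split: "X t \<omega> = Xp t \<omega> - Xn t \<omega>" for t \<omega>
    by (simp add: Xp_def Xn_def max_def)
  have mean_split: "expectation (Xp t) - expectation (Xn t) = \<mu>" if "t \<ge> 1" for t
    using mean[OF that] pos(1)[OF that] neg(1)[OF that]
    by (simp add: split[abs_def] Xp_def[symmetric] Xn_def[symmetric])
  have "AE \<omega> in M. (\<lambda>T. (\<Sum>t\<in>{1..T}. X t \<omega> - \<mu>) / real T) \<longlonglongrightarrow> 0"
    using pos(2) neg(2)
  proof eventually_elim
    case (elim \<omega>)
    have "(\<Sum>t\<in>{1..T}. Xp t \<omega> - expectation (Xp t)) - (\<Sum>t\<in>{1..T}. Xn t \<omega> - expectation (Xn t))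
        = (\<Sum>t\<in>{1..T}. X t \<omega> - \<mu>)" for T
      unfolding sum_subtractf[symmetric]
    proof (rule sum.cong[OF refl])
      fix t assume "t \<in> {1..T}"
      then show "Xp t \<omega> - expectation (Xp t) - (Xn t \<omega> - expectation (Xn t)) = X t \<omega> - \<mu>"
        using mean_split[of t] split[of t \<omega>] by simp
    qed
    then show ?case
      using tendsto_diff[OF elim] by (simp add: diff_divide_distrib[symmetric])
  qed
  then show ?thesis
    by (rule eventually_mono) (rule mean_tendsto_of_centered)
qed

section \<open>Averages of Gaussian noise\<close>

lemma (in prob_space) normal_distributed_power:
  assumes "\<sigma> > 0" and Y: "distributed M lborel Y (\<lambda>y. ennreal (normal_density 0 \<sigma> y))"
  shows "integrable M (\<lambda>\<omega>. (Y \<omega>) ^ k)"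
    and "expectation (\<lambda>\<omega>. (Y \<omega>) ^ k) = (\<integral>y. normal_density 0 \<sigma> y * y ^ k \<partial>lborel)"
proof -
  have "integrable lborel (\<lambda>y. normal_density 0 \<sigma> y * y ^ k)"
    using integrable_normal_moment[of \<sigma> 0 k] \<open>\<sigma> > 0\<close> by simp
  then show "integrable M (\<lambda>\<omega>. (Y \<omega>) ^ k)"
    using distributed_integrable[OF Y, of "\<lambda>y. y ^ k"] by simp
  show "expectation (\<lambda>\<omega>. (Y \<omega>) ^ k) = (\<integral>y. normal_density 0 \<sigma> y * y ^ k \<partial>lborel)"
    using distributed_integral[OF Y, of "\<lambda>y. y ^ k"] by simp
qed

lemma (in prob_space) normal_distributed_second_moment:
  assumes "\<sigma> > 0" and Y: "distributed M lborel Y (\<lambda>y. ennreal (normal_density 0 \<sigma> y))"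
  shows "expectation (\<lambda>\<omega>. (Y \<omega>)\<^sup>2) = \<sigma>\<^sup>2"
  using normal_distributed_variance[OF assms] normal_distributed_expectation[OF assms] by simp

lemma (in prob_space) AE_mean_square_tendsto_variance:
  fixes Y :: "nat \<Rightarrow> 'a \<Rightarrow> real" and \<sigma> :: real
  assumes "\<sigma> > 0"
    and normal: "\<And>t. t \<ge> 1 \<Longrightarrow> distributed M lborel (Y t) (\<lambda>y. ennreal (normal_density 0 \<sigma> y))"
    and indep: "\<And>s t. s \<ge> 1 \<Longrightarrow> t \<ge> 1 \<Longrightarrow> s \<noteq> t \<Longrightarrow> indep_var borel (Y s) borel (Y t)"
  shows "AE \<omega> in M. (\<lambda>T. (\<Sum>t\<in>{1..T}. (Y t \<omega>)\<^sup>2) / real T) \<longlonglongrightarrow> \<sigma>\<^sup>2"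
proof (rule AE_mean_tendsto_pairwise_indep[where B="\<integral>y. normal_density 0 \<sigma> y * y ^ 4 \<partial>lborel"])
  fix s t :: nat assume t: "t \<ge> 1"
  have Y_meas: "Y t \<in> borel_measurable M"
    using distributed_measurable[OF normal[OF t]] by simp
  then show "(\<lambda>\<omega>. (Y t \<omega>)\<^sup>2) \<in> borel_measurable M"
    by measurable
  show "integrable M (\<lambda>\<omega>. ((Y t \<omega>)\<^sup>2)\<^sup>2)"
    using normal_distributed_power(1)[OF \<open>\<sigma> > 0\<close> normal[OF t], of 4] by (simp flip: power_mult)
  show "expectation (\<lambda>\<omega>. ((Y t \<omega>)\<^sup>2)\<^sup>2) \<le> (\<integral>y. normal_density 0 \<sigma> y * y ^ 4 \<partial>lborel)"
    using normal_distributed_power(2)[OF \<open>\<sigma> > 0\<close> normal[OF t], of 4] by (simp flip: power_mult)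
  show "expectation (\<lambda>\<omega>. (Y t \<omega>)\<^sup>2) = \<sigma>\<^sup>2"
    by (rule normal_distributed_second_moment[OF \<open>\<sigma> > 0\<close> normal[OF t]])
  assume "s \<ge> 1" "s \<noteq> t"
  then have "indep_var borel ((\<lambda>x. x\<^sup>2) \<circ> Y s) borel ((\<lambda>x. x\<^sup>2) \<circ> Y t)"
    by (intro indep_var_compose[OF indep[OF _ t]]) auto
  then show "indep_var borel (\<lambda>\<omega>. (Y s \<omega>)\<^sup>2) borel (\<lambda>\<omega>. (Y t \<omega>)\<^sup>2)"
    by (simp add: comp_def)
qed

lemma (in prob_space) AE_mean_product_tendsto_zero:
  fixes Y D :: "nat \<Rightarrow> 'a \<Rightarrow> real" and \<sigma> B :: real
  assumes "\<sigma> > 0"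
    and normal: "\<And>t. t \<ge> 1 \<Longrightarrow> distributed M lborel (Y t) (\<lambda>y. ennreal (normal_density 0 \<sigma> y))"
    and D_meas: "\<And>t. t \<ge> 1 \<Longrightarrow> D t \<in> borel_measurable M"
    and D_sq_int: "\<And>t. t \<ge> 1 \<Longrightarrow> integrable M (\<lambda>\<omega>. (D t \<omega>)\<^sup>2)"
    and D_sq_bnd: "\<And>t. t \<ge> 1 \<Longrightarrow> expectation (\<lambda>\<omega>. (D t \<omega>)\<^sup>2) \<le> B"
    and indep_YD: "\<And>t. t \<ge> 1 \<Longrightarrow> indep_var borel (Y t) borel (D t)"
    and indep: "\<And>s t. s \<ge> 1 \<Longrightarrow> t \<ge> 1 \<Longrightarrow> s \<noteq> t \<Longrightarrow>
      indep_var borel (\<lambda>\<omega>. Y s \<omega> * D s \<omega>) borel (\<lambda>\<omega>. Y t \<omega> * D t \<omega>)"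
  shows "AE \<omega> in M. (\<lambda>T. (\<Sum>t\<in>{1..T}. Y t \<omega> * D t \<omega>) / real T) \<longlonglongrightarrow> 0"
proof (rule AE_mean_tendsto_pairwise_indep[where B="\<sigma>\<^sup>2 * B"])
  fix t :: nat assume t: "t \<ge> 1"
  have Y_meas: "Y t \<in> borel_measurable M"
    using distributed_measurable[OF normal[OF t]] by simp
  then show "(\<lambda>\<omega>. Y t \<omega> * D t \<omega>) \<in> borel_measurable M"
    using D_meas[OF t] by measurable
  have Y_sq_int: "integrable M (\<lambda>\<omega>. (Y t \<omega>)\<^sup>2)"
    using normal_distributed_power(1)[OF \<open>\<sigma> > 0\<close> normal[OF t], of 2] .
  have "indep_var borel ((\<lambda>x. x\<^sup>2) \<circ> Y t) borel ((\<lambda>x. x\<^sup>2) \<circ> D t)"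
    by (intro indep_var_compose[OF indep_YD[OF t]]) auto
  then have "indep_var borel (\<lambda>\<omega>. (Y t \<omega>)\<^sup>2) borel (\<lambda>\<omega>. (D t \<omega>)\<^sup>2)"
    by (simp add: comp_def)
  note indep_sq = indep_var_integrable[OF this Y_sq_int D_sq_int[OF t]]
    indep_var_lebesgue_integral[OF this Y_sq_int D_sq_int[OF t]]
  show "integrable M (\<lambda>\<omega>. (Y t \<omega> * D t \<omega>)\<^sup>2)"
    using indep_sq(1) by (simp add: power_mult_distrib)
  show "expectation (\<lambda>\<omega>. (Y t \<omega> * D t \<omega>)\<^sup>2) \<le> \<sigma>\<^sup>2 * B"
    using indep_sq(2) normal_distributed_second_moment[OF \<open>\<sigma> > 0\<close> normal[OF t]] D_sq_bnd[OF t]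
    by (simp add: power_mult_distrib mult_left_mono)
  have "integrable M (Y t)" "integrable M (D t)"
    using normal_distributed_power(1)[OF \<open>\<sigma> > 0\<close> normal[OF t], of 1]
      square_integrable_imp_integrable[OF D_meas D_sq_int] t by auto
  then show "expectation (\<lambda>\<omega>. Y t \<omega> * D t \<omega>) = 0"
    using indep_var_lebesgue_integral[OF indep_YD[OF t]]
      normal_distributed_expectation[OF \<open>\<sigma> > 0\<close> normal[OF t]] by simp
qed (rule indep)

lemma liminf_mean_square_sum_ge:
  fixes y d :: "nat \<Rightarrow> real"
  assumes y: "(\<lambda>T. (\<Sum>t\<in>{1..T}. (y t)\<^sup>2) / real T) \<longlonglongrightarrow> c"
    and yd: "(\<lambda>T. (\<Sum>t\<in>{1..T}. y t * d t) / real T) \<longlonglongrightarrow> 0"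
  shows "ereal c \<le> liminf (\<lambda>T. ereal ((\<Sum>t\<in>{1..T}. (y t + d t)\<^sup>2) / real T))"
proof -
  define g where "g T = (\<Sum>t\<in>{1..T}. (y t)\<^sup>2) / real T + 2 * ((\<Sum>t\<in>{1..T}. y t * d t) / real T)" for T
  have "g \<longlonglongrightarrow> c + 2 * 0"
    unfolding g_def by (intro tendsto_intros y yd)
  then have "liminf (\<lambda>T. ereal (g T)) = ereal c"
    by (intro lim_imp_Liminf) auto
  moreover have "g T \<le> (\<Sum>t\<in>{1..T}. (y t + d t)\<^sup>2) / real T" for T
  proof -
    have "(\<Sum>t\<in>{1..T}. (y t)\<^sup>2) + 2 * (\<Sum>t\<in>{1..T}. y t * d t) = (\<Sum>t\<in>{1..T}. (y t)\<^sup>2 + 2 * (y t * d t))"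
      by (simp add: sum.distrib sum_distrib_left)
    also have "\<dots> \<le> (\<Sum>t\<in>{1..T}. (y t + d t)\<^sup>2)"
      by (intro sum_mono) (simp add: power2_eq_square algebra_simps)
    finally show ?thesis
      unfolding g_def by (simp add: add_divide_distrib[symmetric] divide_right_mono)
  qed
  then have "liminf (\<lambda>T. ereal (g T)) \<le> liminf (\<lambda>T. ereal ((\<Sum>t\<in>{1..T}. (y t + d t)\<^sup>2) / real T))"
    by (intro Liminf_mono) auto
  ultimately show ?thesis by simp
qed

section \<open>Independent noise and input sequences\<close>

lemma Int_space_INT_in_sigma_sets:
  assumes "G \<subseteq> Pow \<Omega>" "countable J" "\<And>j. j \<in> J \<Longrightarrow> A j \<in> sigma_sets \<Omega> G"
  shows "\<Omega> \<inter> (\<Inter>j\<in>J. A j) \<in> sigma_sets \<Omega> G"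
proof (cases "J = {}")
  case False
  interpret sigma_algebra \<Omega> "sigma_sets \<Omega> G"
    using assms(1) by (rule sigma_algebra_sigma_sets)
  have "(\<Inter>j\<in>J. A j) \<in> sigma_sets \<Omega> G"
    using assms False by (intro countable_INT') auto
  then show ?thesis
    using sets_into_space by auto
qed (simp add: sigma_sets_top)

lemma Int_stable_vimages: "Int_stable {f -` A \<inter> \<Omega> | A. A \<in> sets N}"
  unfolding Int_stable_def
proof safe
  fix A B assume "A \<in> sets N" "B \<in> sets N"
  then show "\<exists>C. f -` A \<inter> \<Omega> \<inter> (f -` B \<inter> \<Omega>) = f -` C \<inter> \<Omega> \<and> C \<in> sets N"
    by (intro exI[of _ "A \<inter> B"]) auto
qed

lemma measurable_sigma_of_vimages:
  assumes f: "f \<in> measurable M N" and G: "G \<subseteq> Pow (space M)"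
    and vimages: "\<And>A. A \<in> sets N \<Longrightarrow> f -` A \<inter> space M \<in> G"
  shows "f \<in> measurable (sigma (space M) G) N"
proof (rule measurableI)
  show "f x \<in> space N" if "x \<in> space (sigma (space M) G)" for x
    using that measurable_space[OF f] by (simp add: space_measure_of[OF G])
  show "f -` A \<inter> space (sigma (space M) G) \<in> sets (sigma (space M) G)" if "A \<in> sets N" for A
    using vimages[OF that] by (simp add: space_measure_of[OF G] sets_measure_of[OF G])
qed

lemma (in prob_space) prob_Int_INT_indep_sets:
  assumes ind: "indep_sets F I" and J: "J \<subseteq> I" "finite J" and A: "\<And>j. j \<in> J \<Longrightarrow> A j \<in> F j"
  shows "prob (space M \<inter> (\<Inter>j\<in>J. A j)) = (\<Prod>j\<in>J. prob (A j))"
proof (cases "J = {}")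
  case False
  have "A j \<subseteq> space M" if "j \<in> J" for j
  proof -
    have "F j \<subseteq> events" using ind J(1) that unfolding indep_sets_def by (auto dest: bspec)
    then show ?thesis using A[OF that] sets.sets_into_space by auto
  qed
  then have "space M \<inter> (\<Inter>j\<in>J. A j) = (\<Inter>j\<in>J. A j)"
    using False by auto
  with indep_setsD[OF ind J(1) False J(2)] A show ?thesis
    by simp
qed (simp add: prob_space)

lemma (in prob_space) indep_var_of_indep_sets:
  fixes V W :: "'a \<Rightarrow> real"
  assumes ind: "indep_sets E I" and stable: "\<And>i. i \<in> I \<Longrightarrow> Int_stable (E i)"
    and S: "J \<subseteq> I" "K \<subseteq> I" "J \<inter> K = {}"
    and V: "random_variable borel V" "V \<in> borel_measurable (sigma (space M) (\<Union>i\<in>J. E i))"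
    and W: "random_variable borel W" "W \<in> borel_measurable (sigma (space M) (\<Union>i\<in>K. E i))"
  shows "indep_var borel V borel W"
proof -
  have Pow: "(\<Union>i\<in>S. E i) \<subseteq> Pow (space M)" if "S \<subseteq> I" for S
  proof -
    have "E i \<subseteq> events" if "i \<in> S" for i
      using ind \<open>S \<subseteq> I\<close> that unfolding indep_sets_def by (auto dest: bspec)
    then have "(\<Union>i\<in>S. E i) \<subseteq> events" by (rule UN_least)
    then show ?thesis using sets.space_closed by (rule order_trans)
  qed
  have "indep_sets E (\<Union>b. case_bool J K b)"
    by (rule indep_sets_mono_index[OF _ ind]) (use S in \<open>auto split: bool.split_asm\<close>)
  then have "indep_sets (\<lambda>b. sigma_sets (space M) (\<Union>i\<in>case_bool J K b. E i)) UNIV"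
    by (rule indep_sets_collect_sigma)
       (use S stable in \<open>auto simp: disjoint_family_on_def split: bool.splits\<close>)
  then have indep12: "indep_sets (case_bool (sigma_sets (space M) (\<Union>i\<in>J. E i))
      (sigma_sets (space M) (\<Union>i\<in>K. E i))) UNIV"
    by (rule indep_sets_cong[THEN iffD1, rotated -1]) (auto split: bool.split)
  have subV: "sigma_sets (space M) {V -` A \<inter> space M |A. A \<in> sets borel} \<subseteq> sigma_sets (space M) (\<Union>i\<in>J. E i)"
    using measurable_sets[OF V(2)] Pow[OF S(1)]
    by (intro sigma_sets_mono) (auto simp: sets_measure_of space_measure_of)
  have subW: "sigma_sets (space M) {W -` A \<inter> space M |A. A \<in> sets borel} \<subseteq> sigma_sets (space M) (\<Union>i\<in>K. E i)"
    using measurable_sets[OF W(2)] Pow[OF S(2)]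
    by (intro sigma_sets_mono) (auto simp: sets_measure_of space_measure_of)
  show ?thesis
    unfolding indep_var_eq indep_set_def
    by (intro conjI V(1) W(1) indep_sets_mono_sets[OF indep12]) (use subV subW in \<open>simp split: bool.split\<close>)
qed

definition joint_events :: "'a measure \<Rightarrow> 'i set \<Rightarrow> 'b measure \<Rightarrow> ('i \<Rightarrow> 'a \<Rightarrow> 'b) \<Rightarrow> 'a set set" where
  "joint_events M I N Z =
     sigma_sets (space M) {(\<lambda>\<omega>. \<lambda>t\<in>I. Z t \<omega>) -` A \<inter> space M | A. A \<in> sets (PiM I (\<lambda>_. N))}"

lemma vimage_component_in_joint_events:
  assumes Z: "(\<lambda>\<omega>. \<lambda>t\<in>I. Z t \<omega>) \<in> measurable M (PiM I (\<lambda>_. N))" and "t \<in> I" "C \<in> sets N"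
  shows "Z t -` C \<inter> space M \<in> joint_events M I N Z"
proof -
  let ?B = "(\<lambda>f. f t) -` C \<inter> space (PiM I (\<lambda>_. N))"
  have B_sets: "?B \<in> sets (PiM I (\<lambda>_. N))"
    using assms(2,3) by (intro measurable_sets[OF measurable_component_singleton]) auto
  have B_vimage: "(\<lambda>\<omega>. \<lambda>t\<in>I. Z t \<omega>) -` ?B \<inter> space M = Z t -` C \<inter> space M"
    using measurable_space[OF Z] \<open>t \<in> I\<close> by auto
  have "Z t -` C \<inter> space M
      \<in> {(\<lambda>\<omega>. \<lambda>t\<in>I. Z t \<omega>) -` A \<inter> space M | A. A \<in> sets (PiM I (\<lambda>_. N))}"
    by (intro CollectI exI[of _ ?B] conjI B_sets B_vimage[symmetric])
  then show ?thesis
    unfolding joint_events_def by (rule sigma_sets.Basic)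
qed

lemma (in prob_space) Int_INT_vimages_in_joint_events:
  assumes indep: "indep_vars (\<lambda>_. N) Z I"
    and Z: "(\<lambda>\<omega>. \<lambda>t\<in>I. Z t \<omega>) \<in> measurable M (PiM I (\<lambda>_. N))"
    and J: "J \<subseteq> I" "finite J"
    and B: "\<And>t. t \<in> J \<Longrightarrow> B t \<in> {Z t -` A \<inter> space M | A. A \<in> sets N}"
  shows "space M \<inter> (\<Inter>t\<in>J. B t) \<in> joint_events M I N Z"
    and "prob (space M \<inter> (\<Inter>t\<in>J. B t)) = (\<Prod>t\<in>J. prob (B t))"
proof -
  have "B t \<in> joint_events M I N Z" if t: "t \<in> J" for t
  proof -
    obtain C where "C \<in> sets N" "B t = Z t -` C \<inter> space M"
      using B[OF t] by blast
    then show ?thesis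
      using vimage_component_in_joint_events[OF Z] J(1) t by auto
  qed
  then show "space M \<inter> (\<Inter>t\<in>J. B t) \<in> joint_events M I N Z"
    unfolding joint_events_def
    by (intro Int_space_INT_in_sigma_sets countable_finite J(2)) auto
  show "prob (space M \<inter> (\<Inter>t\<in>J. B t)) = (\<Prod>t\<in>J. prob (B t))"
    using indep by (intro prob_Int_INT_indep_sets[OF _ J B]) (simp add: indep_vars_def2)
qed

locale indep_sequences = prob_space +
  fixes MX :: "'b measure" and MU :: "'c measure"
    and X :: "nat \<Rightarrow> 'a \<Rightarrow> 'b" and U :: "nat \<Rightarrow> 'a \<Rightarrow> 'c"
  assumes indep_X: "indep_vars (\<lambda>_. MX) X {1..}"
    and indep_U: "indep_vars (\<lambda>_. MU) U {1..}"
    and X_measurable: "(\<lambda>\<omega>. \<lambda>t\<in>{1..}. X t \<omega>) \<in> measurable M (PiM {1..} (\<lambda>_. MX))"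
    and U_measurable: "(\<lambda>\<omega>. \<lambda>t\<in>{1..}. U t \<omega>) \<in> measurable M (PiM {1..} (\<lambda>_. MU))"
    and indep_X_U: "indep_set (joint_events M {1..} MX X) (joint_events M {1..} MU U)"
begin

definition component_events :: "nat \<times> bool \<Rightarrow> 'a set set" where
  "component_events = (\<lambda>(t, b). if b then {U t -` A \<inter> space M | A. A \<in> sets MU}
                                 else {X t -` A \<inter> space M | A. A \<in> sets MX})"

lemma random_variable_X: "t \<ge> 1 \<Longrightarrow> random_variable MX (X t)"
  using indep_X unfolding indep_vars_def2 by auto

lemma random_variable_U: "t \<ge> 1 \<Longrightarrow> random_variable MU (U t)"
  using indep_U unfolding indep_vars_def2 by auto

lemma component_events_Pow: "component_events i \<subseteq> Pow (space M)"
  by (auto simp: component_events_def split: prod.split)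

lemma component_events_subset_events: "fst i \<ge> 1 \<Longrightarrow> component_events i \<subseteq> events"
  using measurable_sets[OF random_variable_X] measurable_sets[OF random_variable_U]
  by (auto simp: component_events_def split: prod.split)

text \<open>A finite intersection of component events splits into a noise part and an input part; the
  former lies in the noise sequence's \<sigma>-algebra and the latter in the input sequence's, so
  \<open>indep_X_U\<close> factors it, and \<open>indep_X\<close>, \<open>indep_U\<close> factor each part further.\<close>
lemma indep_sets_component_events: "indep_sets component_events ({1..} \<times> UNIV)"
proof (rule indep_setsI)
  show "component_events i \<subseteq> events" if "i \<in> {1..} \<times> UNIV" for i
    using that by (intro component_events_subset_events) auto
  fix A J assume J: "J \<noteq> {}" "J \<subseteq> {1..} \<times> (UNIV :: bool set)" "finite J"
    and A: "\<forall>j\<in>J. A j \<in> component_events j"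
  define J0 where "J0 = {t. (t, False) \<in> J}"
  define J1 where "J1 = {t. (t, True) \<in> J}"
  have J_eq: "J = (\<lambda>t. (t, False)) ` J0 \<union> (\<lambda>t. (t, True)) ` J1"
  proof (intro set_eqI iffI)
    fix j assume "j \<in> J"
    then show "j \<in> (\<lambda>t. (t, False)) ` J0 \<union> (\<lambda>t. (t, True)) ` J1"
      unfolding J0_def J1_def by (cases j, cases "snd j") auto
  qed (auto simp: J0_def J1_def)
  have J01: "J0 \<subseteq> {1..}" "J1 \<subseteq> {1..}" "finite J0" "finite J1"
    using J(2,3) finite_vimageI[OF J(3), of "\<lambda>t. (t, False)"] finite_vimageI[OF J(3), of "\<lambda>t. (t, True)"]
    by (auto simp: J0_def J1_def vimage_def inj_on_def)
  define a where "a = space M \<inter> (\<Inter>t\<in>J0. A (t, False))"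
  define b where "b = space M \<inter> (\<Inter>t\<in>J1. A (t, True))"
  obtain j where "j \<in> J" using J(1) by blast
  then have "(\<Inter>j\<in>J. A j) \<subseteq> space M"
    using component_events_Pow[of j] A by blast
  moreover have "(\<Inter>j\<in>J. A j) = (\<Inter>t\<in>J0. A (t, False)) \<inter> (\<Inter>t\<in>J1. A (t, True))"
    by (subst J_eq) (simp add: INT_Un image_image)
  ultimately have inter: "(\<Inter>j\<in>J. A j) = a \<inter> b"
    unfolding a_def b_def by blast
  have "A (t, False) \<in> {X t -` C \<inter> space M | C. C \<in> sets MX}" if "t \<in> J0" for t
  proof -
    have "A (t, False) \<in> component_events (t, False)" using A that by (simp add: J0_def)
    then show ?thesis by (simp add: component_events_def)
  qed
  note X_part = Int_INT_vimages_in_joint_events[OF indep_X X_measurable J01(1,3) this, folded a_def]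
  have "A (t, True) \<in> {U t -` C \<inter> space M | C. C \<in> sets MU}" if "t \<in> J1" for t
  proof -
    have "A (t, True) \<in> component_events (t, True)" using A that by (simp add: J1_def)
    then show ?thesis by (simp add: component_events_def)
  qed
  note U_part = Int_INT_vimages_in_joint_events[OF indep_U U_measurable J01(2,4) this, folded b_def]
  have prod_split: "(\<Prod>j\<in>J. prob (A j)) = (\<Prod>t\<in>J0. prob (A (t, False))) * (\<Prod>t\<in>J1. prob (A (t, True)))"
    unfolding J_eq using J(3) J_eq
    by (subst prod.union_disjoint) (auto simp: prod.reindex inj_on_def finite_image_iff)
  show "prob (\<Inter>j\<in>J. A j) = (\<Prod>j\<in>J. prob (A j))"
    unfolding inter prod_split
    using indep_setD[OF indep_X_U X_part(1) U_part(1)] X_part(2) U_part(2) by simp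
qed

lemma Int_stable_component_events: "Int_stable (component_events i)"
  by (cases i) (simp add: component_events_def Int_stable_vimages)

lemma measurable_sigma_component_events_X:
  assumes "t \<ge> 1" "(t, False) \<in> S"
  shows "X t \<in> measurable (sigma (space M) (\<Union>i\<in>S. component_events i)) MX"
proof (rule measurable_sigma_of_vimages[OF random_variable_X[OF assms(1)]])
  show "(\<Union>i\<in>S. component_events i) \<subseteq> Pow (space M)"
    using component_events_Pow by (rule UN_least)
  show "X t -` A \<inter> space M \<in> (\<Union>i\<in>S. component_events i)" if "A \<in> sets MX" for A
  proof (rule UN_I[OF assms(2)])
    show "X t -` A \<inter> space M \<in> component_events (t, False)"
      using that by (auto simp: component_events_def)
  qed
qed

lemma measurable_sigma_component_events_U:
  assumes "t \<ge> 1" "(t, True) \<in> S"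
  shows "U t \<in> measurable (sigma (space M) (\<Union>i\<in>S. component_events i)) MU"
proof (rule measurable_sigma_of_vimages[OF random_variable_U[OF assms(1)]])
  show "(\<Union>i\<in>S. component_events i) \<subseteq> Pow (space M)"
    using component_events_Pow by (rule UN_least)
  show "U t -` A \<inter> space M \<in> (\<Union>i\<in>S. component_events i)" if "A \<in> sets MU" for A
  proof (rule UN_I[OF assms(2)])
    show "U t -` A \<inter> space M \<in> component_events (t, True)"
      using that by (auto simp: component_events_def)
  qed
qed

lemma indep_var_same_time:
  fixes g :: "'b \<Rightarrow> real" and h :: "'c \<Rightarrow> real"
  assumes t: "t \<ge> 1" and g: "g \<in> borel_measurable MX" and h: "h \<in> borel_measurable MU"
  shows "indep_var borel (\<lambda>\<omega>. g (X t \<omega>)) borel (\<lambda>\<omega>. h (U t \<omega>))"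
proof (rule indep_var_of_indep_sets[OF indep_sets_component_events Int_stable_component_events])
  show "(\<lambda>\<omega>. g (X t \<omega>)) \<in> borel_measurable (sigma (space M) (\<Union>i\<in>{(t, False)}. component_events i))"
    by (rule measurable_compose[OF measurable_sigma_component_events_X[OF t singletonI] g])
  show "(\<lambda>\<omega>. h (U t \<omega>)) \<in> borel_measurable (sigma (space M) (\<Union>i\<in>{(t, True)}. component_events i))"
    by (rule measurable_compose[OF measurable_sigma_component_events_U[OF t singletonI] h])
qed (use t measurable_compose[OF random_variable_X g] measurable_compose[OF random_variable_U h] in auto)

lemma indep_var_distinct_times:
  fixes g h :: "'b \<times> 'c \<Rightarrow> real"
  assumes st: "s \<ge> 1" "t \<ge> 1" "s \<noteq> t"
    and g: "g \<in> borel_measurable (MX \<Otimes>\<^sub>M MU)" and h: "h \<in> borel_measurable (MX \<Otimes>\<^sub>M MU)"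
  shows "indep_var borel (\<lambda>\<omega>. g (X s \<omega>, U s \<omega>)) borel (\<lambda>\<omega>. h (X t \<omega>, U t \<omega>))"
proof (rule indep_var_of_indep_sets[OF indep_sets_component_events Int_stable_component_events])
  have "(\<lambda>\<omega>. f (X r \<omega>, U r \<omega>))
      \<in> borel_measurable (sigma (space M) (\<Union>i\<in>{(r, False), (r, True)}. component_events i))"
    if "r \<ge> 1" "f \<in> borel_measurable (MX \<Otimes>\<^sub>M MU)" for r and f :: "'b \<times> 'c \<Rightarrow> real"
    using that by (intro measurable_compose[OF measurable_Pair, OF measurable_sigma_component_events_X
          measurable_sigma_component_events_U]) auto
  then show "(\<lambda>\<omega>. g (X s \<omega>, U s \<omega>))
        \<in> borel_measurable (sigma (space M) (\<Union>i\<in>{(s, False), (s, True)}. component_events i))"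
    and "(\<lambda>\<omega>. h (X t \<omega>, U t \<omega>))
        \<in> borel_measurable (sigma (space M) (\<Union>i\<in>{(t, False), (t, True)}. component_events i))"
    using st g h by blast+
qed (use st measurable_compose[OF measurable_Pair[OF random_variable_X random_variable_U] g]
       measurable_compose[OF measurable_Pair[OF random_variable_X random_variable_U] h] in auto)

end

lemma (in indep_sequences) AE_mean_product_tendsto_zero_noise_input:
  fixes y :: "'b \<Rightarrow> real" and h :: "'c \<Rightarrow> real" and \<sigma> B :: real
  assumes "\<sigma> > 0" and y: "y \<in> borel_measurable MX"
    and normal: "\<And>t. t \<ge> 1 \<Longrightarrow> distributed M lborel (\<lambda>\<omega>. y (X t \<omega>)) (\<lambda>z. ennreal (normal_density 0 \<sigma> z))"
    and h: "h \<in> borel_measurable MU"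
    and h_sq_int: "\<And>t. t \<ge> 1 \<Longrightarrow> integrable M (\<lambda>\<omega>. (h (U t \<omega>))\<^sup>2)"
    and h_sq_bnd: "\<And>t. t \<ge> 1 \<Longrightarrow> expectation (\<lambda>\<omega>. (h (U t \<omega>))\<^sup>2) \<le> B"
  shows "AE \<omega> in M. (\<lambda>T. (\<Sum>t\<in>{1..T}. y (X t \<omega>) * h (U t \<omega>)) / real T) \<longlonglongrightarrow> 0"
proof (rule AE_mean_product_tendsto_zero[OF \<open>\<sigma> > 0\<close> normal _ h_sq_int h_sq_bnd])
  show "(\<lambda>\<omega>. h (U t \<omega>)) \<in> borel_measurable M" if "t \<ge> 1" for t
    using measurable_compose[OF random_variable_U[OF that] h] .
  show "indep_var borel (\<lambda>\<omega>. y (X t \<omega>)) borel (\<lambda>\<omega>. h (U t \<omega>))" if "t \<ge> 1" for t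
    by (rule indep_var_same_time[OF that y h])
  have yh: "(\<lambda>z. y (fst z) * h (snd z)) \<in> borel_measurable (MX \<Otimes>\<^sub>M MU)"
    using y h by measurable
  show "indep_var borel (\<lambda>\<omega>. y (X s \<omega>) * h (U s \<omega>)) borel (\<lambda>\<omega>. y (X t \<omega>) * h (U t \<omega>))"
    if "s \<ge> 1" "t \<ge> 1" "s \<noteq> t" for s t
    using indep_var_distinct_times[OF that yh yh] by simp
qed

text \<open>In the application \<open>y (X t)\<close> is the measurement noise of one load and \<open>d x (U t)\<close> the
  difference between the voltages predicted for the true connection \<open>x\<^sub>0\<close> and for \<open>x\<close>.\<close>
lemma (in indep_sequences) AE_least_squares_minimizer:
  fixes y :: "'b \<Rightarrow> real" and d :: "'x \<Rightarrow> 'c \<Rightarrow> real" and F :: "'x set" and \<sigma> :: real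
  assumes "finite F" "\<sigma> > 0" and d_x0: "\<And>u. d x\<^sub>0 u = 0"
    and y: "y \<in> borel_measurable MX"
    and normal: "\<And>t. t \<ge> 1 \<Longrightarrow> distributed M lborel (\<lambda>\<omega>. y (X t \<omega>)) (\<lambda>z. ennreal (normal_density 0 \<sigma> z))"
    and d: "\<And>x. x \<in> F \<Longrightarrow> d x \<in> borel_measurable MU"
    and moments: "\<And>x. x \<in> F \<Longrightarrow> \<exists>B. \<forall>t\<ge>1. integrable M (\<lambda>\<omega>. (d x (U t \<omega>))\<^sup>2)
                                         \<and> expectation (\<lambda>\<omega>. (d x (U t \<omega>))\<^sup>2) \<le> B"
  shows "AE \<omega> in M. \<exists>c. (\<lambda>T. (\<Sum>t\<in>{1..T}. (y (X t \<omega>) + d x\<^sub>0 (U t \<omega>))\<^sup>2) / real T) \<longlonglongrightarrow> c \<and>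
     (\<forall>x\<in>F. ereal c \<le> liminf (\<lambda>T. ereal ((\<Sum>t\<in>{1..T}. (y (X t \<omega>) + d x (U t \<omega>))\<^sup>2) / real T)))"
proof -
  have y_fst: "(\<lambda>z. y (fst z)) \<in> borel_measurable (MX \<Otimes>\<^sub>M MU)"
    using y by measurable
  have "AE \<omega> in M. (\<lambda>T. (\<Sum>t\<in>{1..T}. (y (X t \<omega>))\<^sup>2) / real T) \<longlonglongrightarrow> \<sigma>\<^sup>2"
    using indep_var_distinct_times[OF _ _ _ y_fst y_fst] normal
    by (intro AE_mean_square_tendsto_variance[OF \<open>\<sigma> > 0\<close>]) auto
  moreover have "AE \<omega> in M. \<forall>x\<in>F. (\<lambda>T. (\<Sum>t\<in>{1..T}. y (X t \<omega>) * d x (U t \<omega>)) / real T) \<longlonglongrightarrow> 0"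
  proof (rule AE_finite_allI[OF \<open>finite F\<close>])
    fix x assume x: "x \<in> F"
    then obtain B where B: "\<And>t. t \<ge> 1 \<Longrightarrow> integrable M (\<lambda>\<omega>. (d x (U t \<omega>))\<^sup>2)"
        "\<And>t. t \<ge> 1 \<Longrightarrow> expectation (\<lambda>\<omega>. (d x (U t \<omega>))\<^sup>2) \<le> B"
      using moments by blast
    show "AE \<omega> in M. (\<lambda>T. (\<Sum>t\<in>{1..T}. y (X t \<omega>) * d x (U t \<omega>)) / real T) \<longlonglongrightarrow> 0"
      by (rule AE_mean_product_tendsto_zero_noise_input[OF \<open>\<sigma> > 0\<close> y normal d[OF x] B])
  qed
  ultimately show ?thesis
  proof eventually_elim
    case (elim \<omega>)
    have "ereal (\<sigma>\<^sup>2) \<le> liminf (\<lambda>T. ereal ((\<Sum>t\<in>{1..T}. (y (X t \<omega>) + d x (U t \<omega>))\<^sup>2) / real T))"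
      if "x \<in> F" for x
      using elim that by (intro liminf_mean_square_sum_ge) auto
    with elim show ?case
      by (intro exI[of _ "\<sigma>\<^sup>2"]) (simp add: d_x0)
  qed
qed

section \<open>The phase identification model\<close>

lemma gaussian_vec_component:
  assumes Z: "gaussian_vec P d S Z" and S: "pos_def_mat d S" and m: "m < d"
  shows "S m m > 0"
    and "distributed P lborel (Z m) (\<lambda>y. ennreal (normal_density 0 (sqrt (S m m)) y))"
proof -
  define a :: "nat \<Rightarrow> real" where "a i = of_bool (i = m)" for i
  have a_nonzero: "\<exists>i<d. a i \<noteq> 0"
    using m by (auto simp: a_def)
  have "(\<Sum>j<d. a i * S i j * a j) = a i * S i m" for i
    using m by (simp add: a_def sum_distrib_left[symmetric] mult.assoc)
  then have quadratic_form: "(\<Sum>i<d. \<Sum>j<d. a i * S i j * a j) = S m m"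
    using m by (simp add: a_def)
  have linear_form: "(\<lambda>\<omega>. \<Sum>i<d. a i * Z i \<omega>) = Z m"
    using m by (simp add: a_def)
  have "\<forall>a. (\<exists>i<d. a i \<noteq> 0) \<longrightarrow> (\<Sum>i<d. \<Sum>j<d. a i * S i j * a j) > 0"
    using S by (simp add: pos_def_mat_def)
  from this[rule_format, OF a_nonzero] show "S m m > 0"
    unfolding quadratic_form .
  have "\<forall>a. (\<exists>i<d. a i \<noteq> 0) \<longrightarrow> distributed P lborel (\<lambda>\<omega>. \<Sum>i<d. a i * Z i \<omega>)
      (\<lambda>y. ennreal (normal_density 0 (sqrt (\<Sum>i<d. \<Sum>j<d. a i * S i j * a j)) y))"
    using Z by (simp add: gaussian_vec_def)
  from this[rule_format, OF a_nonzero]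
  show "distributed P lborel (Z m) (\<lambda>y. ennreal (normal_density 0 (sqrt (S m m)) y))"
    unfolding quadratic_form linear_form .
qed

lemma (in prob_space) square_integrable_bounded_of_SUP_nn_integral:
  fixes f g :: "nat \<Rightarrow> 'a \<Rightarrow> real"
  assumes meas: "\<And>t. t \<ge> 1 \<Longrightarrow> f t \<in> borel_measurable M"
    and le: "\<And>t \<omega>. t \<ge> 1 \<Longrightarrow> (f t \<omega>)\<^sup>2 \<le> g t \<omega>"
    and finite: "(SUP t\<in>{1..}. \<integral>\<^sup>+ \<omega>. ennreal (g t \<omega>) \<partial>M) < \<infinity>"
  shows "\<exists>B. \<forall>t\<ge>1. integrable M (\<lambda>\<omega>. (f t \<omega>)\<^sup>2) \<and> expectation (\<lambda>\<omega>. (f t \<omega>)\<^sup>2) \<le> B"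
proof (intro exI allI impI conjI)
  define S where "S = (SUP t\<in>{1..}. \<integral>\<^sup>+ \<omega>. ennreal (g t \<omega>) \<partial>M)"
  fix t :: nat assume t: "t \<ge> 1"
  have sq_meas: "(\<lambda>\<omega>. (f t \<omega>)\<^sup>2) \<in> borel_measurable M"
    using meas[OF t] by measurable
  have "(\<integral>\<^sup>+ \<omega>. ennreal ((f t \<omega>)\<^sup>2) \<partial>M) \<le> (\<integral>\<^sup>+ \<omega>. ennreal (g t \<omega>) \<partial>M)"
    using le[OF t] by (intro nn_integral_mono ennreal_leI)
  also have "\<dots> \<le> S"
    unfolding S_def using t by (intro SUP_upper) auto
  finally have bound: "(\<integral>\<^sup>+ \<omega>. ennreal ((f t \<omega>)\<^sup>2) \<partial>M) \<le> S" .
  then show "integrable M (\<lambda>\<omega>. (f t \<omega>)\<^sup>2)"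
    using finite by (intro integrableI_nonneg[OF sq_meas]) (auto simp: S_def)
  have "expectation (\<lambda>\<omega>. (f t \<omega>)\<^sup>2) = enn2real (\<integral>\<^sup>+ \<omega>. ennreal ((f t \<omega>)\<^sup>2) \<partial>M)"
    by (rule integral_eq_nn_integral[OF sq_meas]) auto
  also have "\<dots> \<le> enn2real S"
    using bound finite by (intro enn2real_mono) (auto simp: S_def)
  finally show "expectation (\<lambda>\<omega>. (f t \<omega>)\<^sup>2) \<le> enn2real S" .
qed

lemma sum_lessThan_3_mult:
  fixes f :: "nat \<Rightarrow> 'a::comm_monoid_add"
  shows "(\<Sum>l<3 * M. f l) = (\<Sum>k<M. f (3 * k) + f (3 * k + 1) + f (3 * k + 2))"
proof (induction M)
  case (Suc M)
  have "3 * Suc M = Suc (Suc (Suc (3 * M)))" by simp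
  then show ?case unfolding \<open>3 * Suc M = _\<close> using Suc by (simp add: add.assoc)
qed simp

lemma Xmat_column_sum:
  "(\<Sum>k<M. Xmat x k l * p k) = (if l < 3 * M then x l * p (l div 3) else 0)"
proof -
  have "(\<Sum>k<M. Xmat x k l * p k) = (\<Sum>k<M. if k = l div 3 then x l * p (l div 3) else 0)"
    by (intro sum.cong refl) (auto simp: Xmat_def)
  also have "\<dots> = (if l < 3 * M then x l * p (l div 3) else 0)"
    by (auto simp: less_mult_imp_div_less dest: div_less_iff_less_mult[THEN iffD1, rotated])
  finally show ?thesis .
qed

lemma vtil_eq_row_sums:
  "vtil M K L x vref p q k =
     (\<Sum>j<3 * M. Xmat x k j * vref j)
   + (\<Sum>j<3 * M. Xmat x k j * (\<Sum>l<3 * M. K j l * (x l * p (l div 3))))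
   + (\<Sum>j<3 * M. Xmat x k j * (\<Sum>l<3 * M. L j l * (x l * q (l div 3))))"
  unfolding vtil_def Xmat_column_sum by (simp add: sum_distrib_left mult.assoc)

lemma Xmat_row_cong:
  assumes "\<forall>i<3. x (3 * k + i) = x' (3 * k + i)"
  shows "Xmat x k = Xmat x' k"
proof
  fix j
  show "Xmat x k j = Xmat x' k j"
  proof (cases "j div 3 = k")
    case True
    then have "j = 3 * k + j mod 3" by (metis div_mult_mod_eq mult.commute)
    then show ?thesis using assms True unfolding Xmat_def by (metis mod_less_divisor zero_less_numeral)
  qed (simp add: Xmat_def)
qed

text \<open>Feasibility fixes the sum of the three entries of each block of a connection vector, so a row
  that is constant on a block cannot tell two feasible vectors apart there.\<close>
lemma sum_weights_cong_blocks:
  fixes r :: "nat \<Rightarrow> real"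
  assumes x: "x \<in> feasible M" and x': "x' \<in> feasible M"
    and blocks: "\<And>k. k < M \<Longrightarrow> (\<forall>i<3. x (3 * k + i) = x' (3 * k + i)) \<or> (\<forall>b<3. r (3 * k + b) = r (3 * k))"
  shows "(\<Sum>l<3 * M. r l * (x l * p (l div 3))) = (\<Sum>l<3 * M. r l * (x' l * p (l div 3)))"
proof -
  have block: "r (3 * k) * (x (3 * k) * p k) + r (3 * k + 1) * (x (3 * k + 1) * p k) + r (3 * k + 2) * (x (3 * k + 2) * p k)
      = r (3 * k) * (x' (3 * k) * p k) + r (3 * k + 1) * (x' (3 * k + 1) * p k) + r (3 * k + 2) * (x' (3 * k + 2) * p k)"
    if k: "k < M" for k
    using blocks[OF k]
  proof
    assume "\<forall>i<3. x (3 * k + i) = x' (3 * k + i)"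
    then have "x (3 * k + i) = x' (3 * k + i)" if "i < 3" for i using that by blast
    from this[of 0] this[of 1] this[of 2] show ?thesis by simp
  next
    assume "\<forall>b<3. r (3 * k + b) = r (3 * k)"
    from this[rule_format, of 1] this[rule_format, of 2]
    have r1: "r (3 * k + 1) = r (3 * k)" and r2: "r (3 * k + 2) = r (3 * k)" by simp_all
    have "r (3 * k) * (y (3 * k) * p k) + r (3 * k + 1) * (y (3 * k + 1) * p k) + r (3 * k + 2) * (y (3 * k + 2) * p k)
        = r (3 * k) * p k * (y (3 * k) + y (3 * k + 1) + y (3 * k + 2))" for y :: "nat \<Rightarrow> real"
      unfolding r1 r2 by (simp add: algebra_simps)
    moreover have "x (3 * k) + x (3 * k + 1) + x (3 * k + 2) = 1" "x' (3 * k) + x' (3 * k + 1) + x' (3 * k + 2) = 1"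
      using x x' k by (simp_all add: feasible_def)
    ultimately show ?thesis by simp
  qed
  have div3: "Suc (3 * k) div 3 = k" "Suc (Suc (3 * k)) div 3 = k" for k :: nat by simp_all
  show ?thesis
    unfolding sum_lessThan_3_mult using block by (intro sum.cong refl) (simp add: div3)
qed

lemma Khat_Lhat_ThreePhase_column_const:
  assumes "ty k = ThreePhase" "b < 3"
  shows "Khat N \<nu> ty G H j (3 * k + b) = Khat N \<nu> ty G H j (3 * k)"
    and "Lhat N \<nu> ty G H j (3 * k + b) = Lhat N \<nu> ty G H j (3 * k)"
proof -
  have "U1 \<nu> ty l (3 * k + b) = U1 \<nu> ty l (3 * k)" "U2 \<nu> ty l (3 * k + b) = U2 \<nu> ty l (3 * k)" for l
    using assms by (simp_all add: U1_def U2_def)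
  then show "Khat N \<nu> ty G H j (3 * k + b) = Khat N \<nu> ty G H j (3 * k)"
    and "Lhat N \<nu> ty G H j (3 * k + b) = Lhat N \<nu> ty G H j (3 * k)"
    by (simp_all add: Khat_def Lhat_def)
qed

lemma vtil_eq_of_agree_except_ThreePhase:
  assumes x: "x \<in> feasible M" and xs: "xs \<in> feasible M"
    and agree_m: "\<forall>i<3. x (3 * m + i) = xs (3 * m + i)"
    and agree: "\<forall>k<M. k \<noteq> m \<and> ty k \<noteq> ThreePhase \<longrightarrow> (\<forall>i<3. x (3 * k + i) = xs (3 * k + i))"
  shows "vtil M (Khat N \<nu> ty G H) (Lhat N \<nu> ty G H) x vref p q m
       = vtil M (Khat N \<nu> ty G H) (Lhat N \<nu> ty G H) xs vref p q m"
proof -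
  have blocks: "(\<forall>i<3. x (3 * k + i) = xs (3 * k + i)) \<or> ty k = ThreePhase" if "k < M" for k
    using that agree_m agree by (cases "k = m") auto
  have "(\<Sum>l<3 * M. Khat N \<nu> ty G H j l * (x l * r (l div 3))) = (\<Sum>l<3 * M. Khat N \<nu> ty G H j l * (xs l * r (l div 3)))"
    and "(\<Sum>l<3 * M. Lhat N \<nu> ty G H j l * (x l * r (l div 3))) = (\<Sum>l<3 * M. Lhat N \<nu> ty G H j l * (xs l * r (l div 3)))"
    for j r
    using blocks Khat_Lhat_ThreePhase_column_const
    by (intro sum_weights_cong_blocks[OF x xs], fastforce)+
  then show ?thesis
    unfolding vtil_eq_row_sums Xmat_row_cong[OF agree_m] by simp
qed

lemma vtil_restrict:
  "vtil M K L x (\<lambda>j\<in>{..<3 * M}. a j) (\<lambda>i\<in>{..<M}. b i) (\<lambda>i\<in>{..<M}. c i) k = vtil M K L x a b c k"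
  unfolding vtil_def by (intro arg_cong2[where f="(+)"] sum.cong refl) auto

lemma finite_feasible: "finite (feasible M)"
proof (rule finite_subset)
  show "feasible M \<subseteq> {f. \<forall>j. (j \<in> {..<3 * M} \<longrightarrow> f j \<in> {0, 1}) \<and> (j \<notin> {..<3 * M} \<longrightarrow> f j = 0)}"
    by (auto simp: feasible_def)
  show "finite {f. \<forall>j. (j \<in> {..<3 * M} \<longrightarrow> f j \<in> {0 :: real, 1}) \<and> (j \<notin> {..<3 * M} \<longrightarrow> f j = 0)}"
    by (rule finite_set_of_finite_funs) auto
qed

lemma measurable_component_vecM: "j < d \<Longrightarrow> (\<lambda>v. v j) \<in> borel_measurable (vecM d)"
  unfolding vecM_def by (intro measurable_component_singleton) auto

lemma measurable_vtil:
  "(\<lambda>u. vtil M K L x (fst u) (fst (snd u)) (snd (snd u)) k) \<in> borel_measurable (vecM (3 * M) \<Otimes>\<^sub>M vecM M \<Otimes>\<^sub>M vecM M)"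
proof -
  have "(\<lambda>u. fst u j) \<in> borel_measurable (vecM (3 * M) \<Otimes>\<^sub>M vecM M \<Otimes>\<^sub>M vecM M)" if "j < 3 * M" for j
    by (rule measurable_compose[OF measurable_fst measurable_component_vecM[OF that]])
  moreover have "(\<lambda>u. fst (snd u) j) \<in> borel_measurable (vecM (3 * M) \<Otimes>\<^sub>M vecM M \<Otimes>\<^sub>M vecM M)"
    and "(\<lambda>u. snd (snd u) j) \<in> borel_measurable (vecM (3 * M) \<Otimes>\<^sub>M vecM M \<Otimes>\<^sub>M vecM M)" if "j < M" for j
    using measurable_component_vecM[OF that] by measurable
  ultimately show ?thesis unfolding vtil_def
    by (intro borel_measurable_add borel_measurable_sum borel_measurable_times borel_measurable_const) auto
qed

definition voltage_mismatch :: "nat \<Rightarrow> (nat \<Rightarrow> nat \<Rightarrow> real) \<Rightarrow> (nat \<Rightarrow> nat \<Rightarrow> real) \<Rightarrow> (nat \<Rightarrow> real)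
    \<Rightarrow> nat \<Rightarrow> (nat \<Rightarrow> real) \<Rightarrow> (nat \<Rightarrow> real) \<times> (nat \<Rightarrow> real) \<times> (nat \<Rightarrow> real) \<Rightarrow> real" where
  "voltage_mismatch M K L xs m x u =
     vtil M K L xs (fst u) (fst (snd u)) (snd (snd u)) m - vtil M K L x (fst u) (fst (snd u)) (snd (snd u)) m"

lemma measurable_voltage_mismatch:
  "voltage_mismatch M K L xs m x \<in> borel_measurable (vecM (3 * M) \<Otimes>\<^sub>M vecM M \<Otimes>\<^sub>M vecM M)"
  unfolding voltage_mismatch_def[abs_def] by (intro borel_measurable_diff measurable_vtil)

lemma fmT_eq_voltage_mismatch:
  "fmT M K L vref p q n xs m T x \<omega> = (\<Sum>t\<in>{1..T}. (n t \<omega> m + voltage_mismatch M K L xs m x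
     ((\<lambda>j\<in>{..<3 * M}. vref t \<omega> j), (\<lambda>i\<in>{..<M}. p t \<omega> i), (\<lambda>i\<in>{..<M}. q t \<omega> i)))\<^sup>2) / real T"
  by (simp only: fmT_def voltage_mismatch_def fst_conv snd_conv vtil_restrict) (simp add: algebra_simps)

lemma square_voltage_mismatch_le:
  assumes "m < M"
  shows "(voltage_mismatch M K L xs m x ((\<lambda>j\<in>{..<3 * M}. a j), (\<lambda>i\<in>{..<M}. b i), (\<lambda>i\<in>{..<M}. c i)))\<^sup>2
    \<le> (\<Sum>k<M. (vtil M K L xs a b c k - vtil M K L x a b c k)\<^sup>2)"
  using assms by (auto simp: voltage_mismatch_def vtil_restrict intro: member_le_sum)

theorem lemma2:
  fixes P :: "'w measure"
    and N M m :: nat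
    and \<nu> :: "nat \<Rightarrow> nat" and ty :: "nat \<Rightarrow> loadtype"
    and G H :: "nat \<Rightarrow> nat \<Rightarrow> real"
    and vref p q n :: "nat \<Rightarrow> 'w \<Rightarrow> nat \<Rightarrow> real"
    and \<Sigma>n :: "nat \<Rightarrow> nat \<Rightarrow> real"
    and xs :: "nat \<Rightarrow> real"
  defines "K \<equiv> Khat N \<nu> ty G H" and "L \<equiv> Lhat N \<nu> ty G H"
  assumes P: "prob_space P"
    and \<nu>: "\<forall>k<M. \<nu> k < N"
    and m: "m < M"
    and xs: "xs \<in> feasible M"
    and \<Sigma>n: "pos_def_mat M \<Sigma>n"
    \<comment> \<open>noise n(t) ~ N(0, Sigma_n), i.i.d.\<close>
    and gauss: "\<forall>t\<ge>1. gaussian_vec P M \<Sigma>n (\<lambda>i \<omega>. n t \<omega> i)"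
    and noise_indep: "prob_space.indep_vars P (\<lambda>_. vecM M)
                        (\<lambda>t \<omega>. \<lambda>i\<in>{..<M}. n t \<omega> i) {1..}"
    and noise_ident: "\<forall>t\<ge>1. distr P (vecM M) (\<lambda>\<omega>. \<lambda>i\<in>{..<M}. n t \<omega> i)
                          = distr P (vecM M) (\<lambda>\<omega>. \<lambda>i\<in>{..<M}. n 1 \<omega> i)"
    \<comment> \<open>(1) noise sequence independent of input sequence\<close>
    and noise_input_indep:
          "(\<lambda>\<omega>. \<lambda>t\<in>{1..}. \<lambda>i\<in>{..<M}. n t \<omega> i) \<in> measurable P (PiM {1..} (\<lambda>_. vecM M))"
          "(\<lambda>\<omega>. \<lambda>t\<in>{1..}. ((\<lambda>j\<in>{..<3*M}. vref t \<omega> j), (\<lambda>i\<in>{..<M}. p t \<omega> i), (\<lambda>i\<in>{..<M}. q t \<omega> i)))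
             \<in> measurable P (PiM {1..} (\<lambda>_. vecM (3*M) \<Otimes>\<^sub>M vecM M \<Otimes>\<^sub>M vecM M))"
          "prob_space.indep_set P
             (sigma_sets (space P) {(\<lambda>\<omega>. \<lambda>t\<in>{1..}. \<lambda>i\<in>{..<M}. n t \<omega> i) -` A \<inter> space P
                | A. A \<in> sets (PiM {1..} (\<lambda>_. vecM M))})
             (sigma_sets (space P) {(\<lambda>\<omega>. \<lambda>t\<in>{1..}. ((\<lambda>j\<in>{..<3*M}. vref t \<omega> j), (\<lambda>i\<in>{..<M}. p t \<omega> i), (\<lambda>i\<in>{..<M}. q t \<omega> i))) -` A \<inter> space P
                | A. A \<in> sets (PiM {1..} (\<lambda>_. vecM (3*M) \<Otimes>\<^sub>M vecM M \<Otimes>\<^sub>M vecM M))})"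
    \<comment> \<open>(2) input triples independent across times\<close>
    and input_indep: "prob_space.indep_vars P (\<lambda>_. vecM (3*M) \<Otimes>\<^sub>M vecM M \<Otimes>\<^sub>M vecM M)
          (\<lambda>t \<omega>. ((\<lambda>j\<in>{..<3*M}. vref t \<omega> j), (\<lambda>i\<in>{..<M}. p t \<omega> i), (\<lambda>i\<in>{..<M}. q t \<omega> i))) {1..}"
    \<comment> \<open>(3) bounded second moments of the voltage difference\<close>
    and moments: "\<forall>x\<in>feasible M. (SUP t\<in>{1..}. \<integral>\<^sup>+ \<omega>. ennreal (\<Sum>k<M.
          (vtil M K L xs (vref t \<omega>) (p t \<omega>) (q t \<omega>) k - vtil M K L x (vref t \<omega>) (p t \<omega>) (q t \<omega>) k)\<^sup>2) \<partial>P) < \<infinity>"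
  shows "(AE \<omega> in P. \<exists>c. (\<lambda>T. fmT M K L vref p q n xs m T xs \<omega>) \<longlonglongrightarrow> c \<and>
            (\<forall>x\<in>feasible M. ereal c \<le> liminf (\<lambda>T. ereal (fmT M K L vref p q n xs m T x \<omega>))))
       \<and> (\<forall>x\<in>feasible M.
            (\<forall>i<3. x (3*m+i) = xs (3*m+i)) \<and>
            (\<forall>k<M. k \<noteq> m \<and> ty k \<noteq> ThreePhase \<longrightarrow> (\<forall>i<3. x (3*k+i) = xs (3*k+i)))
          \<longrightarrow> (\<forall>t \<omega>. vtil M K L x (vref t \<omega>) (p t \<omega>) (q t \<omega>) m
                     = vtil M K L xs (vref t \<omega>) (p t \<omega>) (q t \<omega>) m)
            \<and> (AE \<omega> in P. \<exists>c. (\<lambda>T. fmT M K L vref p q n xs m T x \<omega>) \<longlonglongrightarrow> c \<and>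
                 (\<forall>x'\<in>feasible M. ereal c \<le> liminf (\<lambda>T. ereal (fmT M K L vref p q n xs m T x' \<omega>)))))"
proof -
  let ?UM = "vecM (3 * M) \<Otimes>\<^sub>M vecM M \<Otimes>\<^sub>M vecM M"
  define noise where "noise t \<omega> = (\<lambda>i\<in>{..<M}. n t \<omega> i)" for t \<omega>
  define input where "input t \<omega> = ((\<lambda>j\<in>{..<3 * M}. vref t \<omega> j), (\<lambda>i\<in>{..<M}. p t \<omega> i), (\<lambda>i\<in>{..<M}. q t \<omega> i))"
    for t \<omega>
  have "indep_sequences P (vecM M) ?UM noise input"
    unfolding indep_sequences_def indep_sequences_axioms_def noise_def[abs_def] input_def[abs_def] joint_events_def
    using P noise_indep input_indep noise_input_indep by simp
  then interpret indep_sequences P "vecM M" ?UM noise input .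
  let ?d = "voltage_mismatch M K L xs m"
  have noise_m: "n t \<omega> m = noise t \<omega> m" for t \<omega>
    using m by (simp add: noise_def)
  have \<sigma>: "sqrt (\<Sigma>n m m) > 0"
    using gaussian_vec_component(1)[OF gauss[rule_format, of 1] \<Sigma>n m] by simp
  have normal: "distributed P lborel (\<lambda>\<omega>. noise t \<omega> m) (\<lambda>z. ennreal (normal_density 0 (sqrt (\<Sigma>n m m)) z))"
    if "t \<ge> 1" for t
    using gaussian_vec_component(2)[OF gauss[rule_format, OF that] \<Sigma>n m] by (simp add: noise_m)
  have "\<exists>B. \<forall>t\<ge>1. integrable P (\<lambda>\<omega>. (?d x (input t \<omega>))\<^sup>2) \<and> expectation (\<lambda>\<omega>. (?d x (input t \<omega>))\<^sup>2) \<le> B"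
    if "x \<in> feasible M" for x
    using measurable_compose[OF random_variable_U measurable_voltage_mismatch] square_voltage_mismatch_le[OF m]
    by (intro square_integrable_bounded_of_SUP_nn_integral[OF _ _ moments[rule_format, OF that]])
       (auto simp: input_def)
  then have part_a: "AE \<omega> in P. \<exists>c. (\<lambda>T. fmT M K L vref p q n xs m T xs \<omega>) \<longlonglongrightarrow> c \<and>
      (\<forall>x\<in>feasible M. ereal c \<le> liminf (\<lambda>T. ereal (fmT M K L vref p q n xs m T x \<omega>)))"
    unfolding fmT_eq_voltage_mismatch input_def[symmetric] noise_m
    by (intro AE_least_squares_minimizer[where y="\<lambda>v. v m" and d="?d", OF finite_feasible \<sigma> _
          measurable_component_vecM[OF m] normal measurable_voltage_mismatch]) (simp_all add: voltage_mismatch_def)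
  show ?thesis
    using part_a unfolding K_def L_def
    by (simp add: fmT_def vtil_eq_of_agree_except_ThreePhase[OF _ xs])
qed
end
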